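(* Let $\rho=|\psi\rangle\langle\psi|$ be an $n$-qubit pure state, $S\subseteq[n]$ non-empty with $s=|S|$, $\epsilon>0$ and $1-\delta\in(0,1)$. Let $N_B=\lceil 8\log(1/\delta)\rceil$, $B=\lceil 4(3/2)^s\epsilon^{-2}\rceil$ and $L=N_BB$. Sample independent random local unitaries $U_1,\dots,U_L$, each $U_l=\bigotimes_{i\in S}U_{l,i}$ with independent Haar-random $U_{l,i}\in U(2)$, and for each $l$ obtain two outcomes $\mathbf{Z}_{l,1},\mathbf{Z}_{l,2}\in\{0,1\}^s$ which, conditioned on $U_l$, are independent with distribution $P_{U_l}(\mathbf{z})=\operatorname{tr}\big(U_l\rho U_l^\dagger(|\mathbf{z}\rangle\langle\mathbf{z}|\otimes\mathbb{I}_{[n]\setminus S})\big)$. For each $1\le b\le N_B$ define $$\overline{\mathcal{C}}^{(b)}_{|\psi\rangle}(S)=1-\Big(\tfrac32\Big)^s\frac1B\sum_{l=(b-1)B+1}^{bB}\mathbb{1}[\mathbf{Z}_{l,1}=\mathbf{Z}_{l,2}].$$ Then $$\Pr\Big[\big|\operatorname{median}\big(\overline{\mathcal{C}}^{(1)}_{|\psi\rangle}(S),\dots,\overline{\mathcal{C}}^{(N_B)}_{|\psi\rangle}(S)\big)-\mathcal{C}_{|\psi\rangle}(S)\big|\ge\epsilon\Big]\le\delta,$$ so that $O\big((3/2)^s\log(1/\delta)\epsilon^{-2}\big)$ measurement outcomes suffice.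
   Context: $[n]=\{1,\dots,n\}$ labels the qubits. For an $n$-qubit pure state $|\psi\rangle$ and a non-empty $S\subseteq[n]$ with $s=|S|$, the concentratable entanglement is $\mathcal{C}_{|\psi\rangle}(S)=1-\frac{1}{2^s}\sum_{\alpha\subseteq S}\operatorname{tr}(\rho_\alpha^2)$, where $\rho_\alpha$ is the reduced state of $|\psi\rangle\langle\psi|$ on the qubits in $\alpha$, and $\operatorname{tr}(\rho_\emptyset^2):=1$. $\mathbb{1}[A]$ is $1$ if $A$ holds and $0$ otherwise. *)

theory Defs
  imports "HOL-Probability.Probability"
begin

text \<open>Computational basis states of the n qubits [n] = {1..n} are encoded as subsets
  x of {1..n} (qubit i is in state 1 iff i is in x).  A pure state is a vector
  psi :: nat set => complex, only its values on Pow {1..n} matter.\<close>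

definition qubits :: "nat \<Rightarrow> nat set" where
  "qubits n = {1..n}"

definition is_pure_state :: "nat \<Rightarrow> (nat set \<Rightarrow> complex) \<Rightarrow> bool" where
  "is_pure_state n psi \<longleftrightarrow> (\<Sum>x\<in>Pow (qubits n). (cmod (psi x))\<^sup>2) = 1"

text \<open>Reduced density matrix of |psi><psi| on the qubits in alpha (partial trace over
  [n] - alpha), entries indexed by basis states a, b of the qubits in alpha.\<close>
definition reduced_state :: "nat \<Rightarrow> (nat set \<Rightarrow> complex) \<Rightarrow> nat set \<Rightarrow> nat set \<Rightarrow> nat set \<Rightarrow> complex" where
  "reduced_state n psi alpha a b =
     (\<Sum>c\<in>Pow (qubits n - alpha). psi (a \<union> c) * cnj (psi (b \<union> c)))"

definition purity :: "nat \<Rightarrow> (nat set \<Rightarrow> complex) \<Rightarrow> nat set \<Rightarrow> real" where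
  "purity n psi alpha =
     (if alpha = {} then 1 else
      Re (\<Sum>a\<in>Pow alpha. \<Sum>b\<in>Pow alpha.
            reduced_state n psi alpha a b * reduced_state n psi alpha b a))"

definition conc_ent :: "nat \<Rightarrow> (nat set \<Rightarrow> complex) \<Rightarrow> nat set \<Rightarrow> real" where
  "conc_ent n psi S = 1 - (1 / 2 ^ card S) * (\<Sum>alpha\<in>Pow S. purity n psi alpha)"

text \<open>2x2 complex matrices, rows/columns indexed by the bit values False (= 0), True (= 1).\<close>
type_synonym mat2 = "complex ^ bool ^ bool"

definition adjoint2 :: "mat2 \<Rightarrow> mat2" where
  "adjoint2 A = (\<chi> i j. cnj (A $ j $ i))"

definition U2 :: "mat2 set" where
  "U2 = {A. A ** adjoint2 A = mat 1 \<and> adjoint2 A ** A = mat 1}"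

definition haar_U2 :: "mat2 measure \<Rightarrow> bool" where
  "haar_U2 H \<longleftrightarrow> prob_space H \<and> sets H = sets borel \<and> emeasure H U2 = 1 \<and>
     (\<forall>V\<in>U2. distr H borel (\<lambda>A. V ** A) = H \<and> distr H borel (\<lambda>A. A ** V) = H)"

text \<open>The state (U (x) I) |psi>, where U = tensor product over i in S of the single-qubit
  unitaries u i acting on qubit i, and identity on [n] - S.\<close>
definition apply_local :: "nat \<Rightarrow> nat set \<Rightarrow> (nat \<Rightarrow> mat2) \<Rightarrow> (nat set \<Rightarrow> complex) \<Rightarrow> nat set \<Rightarrow> complex" where
  "apply_local n S u psi x =
     (\<Sum>w\<in>Pow S. (\<Prod>i\<in>S. u i $ (i \<in> x) $ (i \<in> w)) * psi (w \<union> (x - S)))"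

text \<open>P_U(z) = tr(U rho U^dagger (|z><z| (x) I_{[n]-S})) = <U psi| (|z><z| (x) I) |U psi>,
  for an outcome z in {0,1}^S encoded as the subset z of S of qubits measured as 1.\<close>
definition outcome_prob :: "nat \<Rightarrow> nat set \<Rightarrow> (nat \<Rightarrow> mat2) \<Rightarrow> (nat set \<Rightarrow> complex) \<Rightarrow> nat set \<Rightarrow> real" where
  "outcome_prob n S u psi z =
     (\<Sum>x\<in>{x\<in>Pow (qubits n). x \<inter> S = z}. (cmod (apply_local n S u psi x))\<^sup>2)"

definition median :: "real list \<Rightarrow> real" where
  "median xs = (let ys = sort xs; m = length xs in
     if odd m then ys ! (m div 2) else (ys ! (m div 2 - 1) + ys ! (m div 2)) / 2)"

text \<open>Block estimator C-bar^(b): Z l j is the outcome Z_{l,j} (a subset of S).\<close>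
definition block_estimate :: "nat \<Rightarrow> nat \<Rightarrow> (nat \<Rightarrow> nat \<Rightarrow> nat set) \<Rightarrow> nat \<Rightarrow> real" where
  "block_estimate s B Z b =
     1 - (3/2) ^ s * (1 / real B) *
       (\<Sum>l\<in>{(b-1)*B+1..b*B}. if Z l 1 = Z l 2 then 1 else 0)"

text \<open>The local unitaries
  U (l,i), l in {1..L}, i in S, are i.i.d. Haar on U(2) (product measure); conditioned on
  them, the outcomes Z l 1, Z l 2 (l = 1..L) are independent with laws P_{U_l}.  The
  probability of the event is obtained by integrating the conditional probability.\<close>
definition failure_prob ::
  "mat2 measure \<Rightarrow> nat \<Rightarrow> (nat set \<Rightarrow> complex) \<Rightarrow> nat set \<Rightarrow> real \<Rightarrow> nat \<Rightarrow> nat \<Rightarrow> ennreal" where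
  "failure_prob H n psi S eps NB B =
     (let L = NB * B in
      \<integral>\<^sup>+ U. ennreal
        (\<Sum>Z\<in>(\<Pi>\<^sub>E l\<in>{1..L}. \<Pi>\<^sub>E j\<in>{1::nat,2}. Pow S).
           (\<Prod>l\<in>{1..L}. outcome_prob n S (\<lambda>i. U (l, i)) psi (Z l 1) *
                          outcome_prob n S (\<lambda>i. U (l, i)) psi (Z l 2)) *
           (if \<bar>median (map (block_estimate (card S) B Z) [1..<NB+1]) - conc_ent n psi S\<bar> \<ge> eps
            then 1 else 0))
      \<partial>(\<Pi>\<^sub>M p\<in>{1..L} \<times> S. H))"

end

(*
  For a local unitary U = (x)_{i in S} U_i with independent Haar-random U_i, the probability
  that two independent outcomes of the measurement of S coincide has expectation
  p = 3^-s * sum_{alpha subset S} tr(rho_alpha^2): the fourth moments of a Haar-random element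
  of U(2) are one third of the identity plus the swap contraction, and choosing between the two
  on every qubit of S produces the subsets alpha.  Hence C(S) = 1 - (3/2)^s p, the coincidence
  indicators of the L samples are i.i.d. Bernoulli(p), and every block estimate is unbiased.
  Since (3/2)^s p <= 1, its variance is at most (3/2)^s / B <= eps^2 / 4, so by Chebyshev a
  block is eps-far from C(S) with probability at most 1/4.  If the median is eps-far, at least
  half of the N_B blocks are, so the product of the factors sqrt 3 (far block) and 1/sqrt 3
  (close block) is at least 1; the blocks are independent and each factor has expectation at
  most sqrt 3 / 2, so the failure probability is at most (sqrt 3 / 2)^N_B <= delta.
*)

theory Submission
  imports Defs
begin

section \<open>Fourth moments of the Haar measure on U(2)\<close>

lemma mat2_mult_nth:
  "(A ** B) $ i $ j = A $ i $ False * B $ False $ j + A $ i $ True * B $ True $ j"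
  for A B :: mat2
  by (simp add: matrix_matrix_mult_def UNIV_bool)

lemma U2_columns_orthonormal:
  assumes "A \<in> U2"
  shows "A $ False $ a * cnj (A $ False $ b) + A $ True $ a * cnj (A $ True $ b) =
    (if a = b then 1 else 0)"
proof -
  have "adjoint2 A ** A = mat 1" using assms by (simp add: U2_def)
  then have "(adjoint2 A ** A) $ b $ a = mat 1 $ b $ a" by simp
  then show ?thesis by (auto simp: mat2_mult_nth adjoint2_def mat_def mult.commute)
qed

lemma U2_row_norm:
  assumes "A \<in> U2"
  shows "A $ t $ False * cnj (A $ t $ False) + A $ t $ True * cnj (A $ t $ True) = 1"
proof -
  have "A ** adjoint2 A = mat 1" using assms by (simp add: U2_def)
  then have "(A ** adjoint2 A) $ t $ t = mat 1 $ t $ t" by simp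
  then show ?thesis by (auto simp: mat2_mult_nth adjoint2_def mat_def)
qed

lemma norm_U2_entry_le_1:
  assumes "A \<in> U2"
  shows "cmod (A $ i $ j) \<le> 1"
proof -
  have "complex_of_real ((cmod (A $ False $ j))\<^sup>2 + (cmod (A $ True $ j))\<^sup>2) = 1"
    using U2_columns_orthonormal[OF assms, of j j] by (simp only: of_real_add complex_norm_square) simp
  then have "(cmod (A $ False $ j))\<^sup>2 + (cmod (A $ True $ j))\<^sup>2 = 1"
    using of_real_eq_1_iff by blast
  moreover have "(cmod (A $ i $ j))\<^sup>2 \<le> (cmod (A $ False $ j))\<^sup>2 + (cmod (A $ True $ j))\<^sup>2"
    by (cases i) simp_all
  ultimately have "(cmod (A $ i $ j))\<^sup>2 \<le> 1" by simp
  then show ?thesis by (simp add: power_le_one_iff abs_le_square_iff)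
qed

text \<open>The collision probability \<open>\<Sum>z. P\<^sub>U(z)\<^sup>2\<close> of a local unitary factors over the qubits
  into these sums.\<close>

definition quartic_entry_sum :: "mat2 \<Rightarrow> bool \<Rightarrow> bool \<Rightarrow> bool \<Rightarrow> bool \<Rightarrow> complex" where
  "quartic_entry_sum A a b c d =
     (\<Sum>t\<in>UNIV. A $ t $ a * cnj (A $ t $ b) * A $ t $ c * cnj (A $ t $ d))"

lemma quartic_entry_sum_bool:
  "quartic_entry_sum A a b c d =
     A $ False $ a * cnj (A $ False $ b) * A $ False $ c * cnj (A $ False $ d) +
     A $ True $ a * cnj (A $ True $ b) * A $ True $ c * cnj (A $ True $ d)"
  by (simp add: quartic_entry_sum_def UNIV_bool)

lemma continuous_on_quartic_entry_sum: "continuous_on X (\<lambda>A. quartic_entry_sum A a b c d)"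
  unfolding quartic_entry_sum_bool by (intro continuous_intros)

lemma norm_quartic_entry_sum_le:
  assumes "A \<in> U2"
  shows "cmod (quartic_entry_sum A a b c d) \<le> 2"
proof -
  have "cmod (A $ t $ a * cnj (A $ t $ b) * A $ t $ c * cnj (A $ t $ d)) \<le> 1" for t
    using norm_U2_entry_le_1[OF assms] by (simp add: norm_mult mult_le_one)
  from this[of False] this[of True] show ?thesis
    unfolding quartic_entry_sum_bool by (smt (verit) norm_triangle_ineq)
qed

lemma quartic_entry_sum_swap13: "quartic_entry_sum A a b c d = quartic_entry_sum A c b a d"
  unfolding quartic_entry_sum_def by (simp add: mult_ac)

lemma quartic_entry_sum_swap24: "quartic_entry_sum A a b c d = quartic_entry_sum A a d c b"
  unfolding quartic_entry_sum_def by (simp add: mult_ac)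

lemma quartic_entry_sum_mult_right:
  "quartic_entry_sum (A ** V) a b c d =
     (\<Sum>d'\<in>UNIV. \<Sum>c'\<in>UNIV. \<Sum>b'\<in>UNIV. \<Sum>a'\<in>UNIV.
        V $ a' $ a * cnj (V $ b' $ b) * V $ c' $ c * cnj (V $ d' $ d) * quartic_entry_sum A a' b' c' d')"
  by (simp add: quartic_entry_sum_bool mat2_mult_nth UNIV_bool) (simp add: algebra_simps)

lemma quartic_entry_sum_unitarity:
  assumes "A \<in> U2"
  shows "quartic_entry_sum A False False False False + quartic_entry_sum A False False True True = 1"
proof -
  have "quartic_entry_sum A False False False False + quartic_entry_sum A False False True True =
     (\<Sum>t\<in>UNIV. A $ t $ False * cnj (A $ t $ False) *
        (A $ t $ False * cnj (A $ t $ False) + A $ t $ True * cnj (A $ t $ True)))"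
    unfolding quartic_entry_sum_def by (simp add: sum.distrib[symmetric] algebra_simps)
  also have "\<dots> = (\<Sum>t\<in>UNIV. A $ t $ False * cnj (A $ t $ False))"
    using U2_row_norm[OF assms] by simp
  also have "\<dots> = 1"
    using U2_columns_orthonormal[OF assms, of False False] by (simp add: UNIV_bool)
  finally show ?thesis .
qed

definition phase_gate :: mat2 where
  "phase_gate = (\<chi> i j. if i \<noteq> j then 0 else if i then \<i> else 1)"

definition pauli_X :: mat2 where
  "pauli_X = (\<chi> i j. if i = j then 0 else 1)"

definition rotation_3_4 :: mat2 where
  "rotation_3_4 = (\<chi> i j. if i = j then 3/5 else if i then -4/5 else 4/5)"

lemma phase_gate_U2: "phase_gate \<in> U2"
  by (simp add: U2_def vec_eq_iff mat2_mult_nth adjoint2_def mat_def phase_gate_def all_bool_eq)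

lemma pauli_X_U2: "pauli_X \<in> U2"
  by (simp add: U2_def vec_eq_iff mat2_mult_nth adjoint2_def mat_def pauli_X_def all_bool_eq)

lemma rotation_3_4_U2: "rotation_3_4 \<in> U2"
  by (simp add: U2_def vec_eq_iff mat2_mult_nth adjoint2_def mat_def rotation_3_4_def all_bool_eq)

lemma quartic_entry_sum_mult_phase_gate:
  "quartic_entry_sum (A ** phase_gate) a b c d =
     phase_gate $ a $ a * cnj (phase_gate $ b $ b) * phase_gate $ c $ c * cnj (phase_gate $ d $ d) *
     quartic_entry_sum A a b c d"
proof -
  have "(A ** phase_gate) $ t $ x = A $ t $ x * phase_gate $ x $ x" for t x
    unfolding mat2_mult_nth by (cases x) (simp_all add: phase_gate_def)
  then show ?thesis
    unfolding quartic_entry_sum_def sum_distrib_left by (intro sum.cong) (simp_all add: mult_ac)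
qed

lemma quartic_entry_sum_mult_pauli_X:
  "quartic_entry_sum (A ** pauli_X) a b c d = quartic_entry_sum A (\<not> a) (\<not> b) (\<not> c) (\<not> d)"
proof -
  have "(A ** pauli_X) $ t $ x = A $ t $ (\<not> x)" for t x
    unfolding mat2_mult_nth by (cases x) (simp_all add: pauli_X_def)
  then show ?thesis unfolding quartic_entry_sum_def by simp
qed

definition haar_moment :: "mat2 measure \<Rightarrow> bool \<Rightarrow> bool \<Rightarrow> bool \<Rightarrow> bool \<Rightarrow> complex" where
  "haar_moment H a b c d = (\<integral>A. quartic_entry_sum A a b c d \<partial>H)"

definition u2_moment :: "bool \<Rightarrow> bool \<Rightarrow> bool \<Rightarrow> bool \<Rightarrow> complex" where
  "u2_moment a b c d = (if a = b \<and> c = d then 1/3 else 0) + (if a = d \<and> c = b then 1/3 else 0)"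

context
  fixes H :: "mat2 measure"
  assumes haar: "haar_U2 H"
begin

lemma prob_space_haar: "prob_space H"
  using haar by (simp add: haar_U2_def)

lemma sets_haar: "sets H = sets borel"
  using haar by (simp add: haar_U2_def)

lemma AE_haar_U2: "AE A in H. A \<in> U2"
proof -
  interpret prob_space H by (rule prob_space_haar)
  have "emeasure H U2 = 1" using haar by (simp add: haar_U2_def)
  moreover have "U2 \<in> sets H" using calculation emeasure_notin_sets by fastforce
  ultimately show ?thesis by (simp add: AE_in_set_eq_1 emeasure_eq_measure)
qed

lemma borel_measurable_haarI: "f \<in> borel_measurable borel \<Longrightarrow> f \<in> borel_measurable H"
  using measurable_cong_sets[OF sets_haar refl] by blast

lemma integrable_haar_continuous:
  fixes f :: "mat2 \<Rightarrow> complex"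
  assumes "continuous_on UNIV f" and "\<And>A. A \<in> U2 \<Longrightarrow> cmod (f A) \<le> B"
  shows "integrable H f"
proof -
  interpret prob_space H by (rule prob_space_haar)
  show ?thesis
    by (rule integrable_const_bound[where B=B])
       (use AE_haar_U2 assms in \<open>auto elim!: eventually_mono
          intro!: borel_measurable_haarI borel_measurable_continuous_onI\<close>)
qed

lemma integrable_quartic_entry_sum: "integrable H (\<lambda>A. quartic_entry_sum A a b c d)"
  by (rule integrable_haar_continuous[OF continuous_on_quartic_entry_sum norm_quartic_entry_sum_le])

lemma haar_integral_mult_right:
  fixes f :: "mat2 \<Rightarrow> complex"
  assumes V: "V \<in> U2" and f: "continuous_on UNIV f"
  shows "(\<integral>A. f (A ** V) \<partial>H) = (\<integral>A. f A \<partial>H)"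
proof -
  have "(\<lambda>A. A ** V) \<in> H \<rightarrow>\<^sub>M borel"
    unfolding matrix_matrix_mult_def
    by (intro borel_measurable_haarI borel_measurable_continuous_onI continuous_intros)
  then have "(\<integral>A. f A \<partial>distr H borel (\<lambda>A. A ** V)) = (\<integral>A. f (A ** V) \<partial>H)"
    by (rule integral_distr) (rule borel_measurable_continuous_onI[OF f])
  moreover have "distr H borel (\<lambda>A. A ** V) = H"
    using haar V by (simp add: haar_U2_def)
  ultimately show ?thesis by simp
qed

lemma haar_moment_mult_right:
  "V \<in> U2 \<Longrightarrow> haar_moment H a b c d = (\<integral>A. quartic_entry_sum (A ** V) a b c d \<partial>H)"
  unfolding haar_moment_def
  by (rule haar_integral_mult_right[OF _ continuous_on_quartic_entry_sum, symmetric])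

lemma haar_moment_eq_0:
  assumes "phase_gate $ a $ a * cnj (phase_gate $ b $ b) * phase_gate $ c $ c * cnj (phase_gate $ d $ d) \<noteq> 1"
  shows "haar_moment H a b c d = 0"
proof -
  have "haar_moment H a b c d = (\<integral>A. quartic_entry_sum (A ** phase_gate) a b c d \<partial>H)"
    by (rule haar_moment_mult_right[OF phase_gate_U2])
  also have "\<dots> = phase_gate $ a $ a * cnj (phase_gate $ b $ b) * phase_gate $ c $ c *
      cnj (phase_gate $ d $ d) * haar_moment H a b c d"
    unfolding quartic_entry_sum_mult_phase_gate haar_moment_def by (rule integral_mult_right_zero)
  finally show ?thesis using assms by (metis mult_cancel_right2)
qed

lemma haar_moment_negate: "haar_moment H a b c d = haar_moment H (\<not> a) (\<not> b) (\<not> c) (\<not> d)"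
  using haar_moment_mult_right[OF pauli_X_U2, of a b c d]
  by (simp only: quartic_entry_sum_mult_pauli_X haar_moment_def)

lemma haar_moment_rotation_3_4:
  "haar_moment H a b c d =
     (\<Sum>d'\<in>UNIV. \<Sum>c'\<in>UNIV. \<Sum>b'\<in>UNIV. \<Sum>a'\<in>UNIV.
        rotation_3_4 $ a' $ a * cnj (rotation_3_4 $ b' $ b) * rotation_3_4 $ c' $ c *
        cnj (rotation_3_4 $ d' $ d) * haar_moment H a' b' c' d')"
proof -
  have "haar_moment H a b c d = (\<integral>A. quartic_entry_sum (A ** rotation_3_4) a b c d \<partial>H)"
    by (rule haar_moment_mult_right[OF rotation_3_4_U2])
  then show ?thesis
    unfolding quartic_entry_sum_mult_right haar_moment_def
    by (simp add: integrable_quartic_entry_sum integral_mult_right_zero)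
qed

lemma haar_moment_unitarity:
  "haar_moment H False False False False + haar_moment H False False True True = 1"
proof -
  interpret prob_space H by (rule prob_space_haar)
  have "haar_moment H False False False False + haar_moment H False False True True =
     (\<integral>A. quartic_entry_sum A False False False False + quartic_entry_sum A False False True True \<partial>H)"
    unfolding haar_moment_def
    by (rule Bochner_Integration.integral_add[symmetric]) (rule integrable_quartic_entry_sum)+
  also have "\<dots> = (\<integral>A. 1 \<partial>H)"
    by (rule integral_cong_AE)
       (use AE_haar_U2 quartic_entry_sum_unitarity in \<open>auto elim!: eventually_mono
          intro!: borel_measurable_haarI borel_measurable_continuous_onI continuous_intros
            continuous_on_quartic_entry_sum\<close>)
  finally show ?thesis by (simp add: prob_space)
qed

text \<open>Invariance under the phase gate kills every moment whose phases do not cancel;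
  invariance under Pauli X and the symmetries of the quartic sum leave two unknowns,
  \<open>x = haar_moment H False False False False\<close> and \<open>y = haar_moment H False False True True\<close>.
  Unitarity gives \<open>x + y = 1\<close>, and invariance under the rational rotation gives
  \<open>625 x = 337 x + 576 y\<close>.\<close>

lemma haar_moment_eq: "haar_moment H a b c d = u2_moment a b c d"
proof -
  have zero: "haar_moment H a b c d = 0"
    if "phase_gate $ a $ a * cnj (phase_gate $ b $ b) * phase_gate $ c $ c * cnj (phase_gate $ d $ d) \<noteq> 1"
    for a b c d
    using haar_moment_eq_0 that by blast
  have ne: "\<i> \<noteq> (1::complex)" "- \<i> \<noteq> (1::complex)" "-1 \<noteq> (1::complex)"
    by (simp_all add: complex_eq_iff)
  have sym: "haar_moment H True True True True = haar_moment H False False False False"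
    "haar_moment H True True False False = haar_moment H False False True True"
    "haar_moment H False True True False = haar_moment H False False True True"
    "haar_moment H True False False True = haar_moment H False False True True"
    using haar_moment_negate[of True True True True] haar_moment_negate[of True True False False]
    by (simp_all add: haar_moment_def quartic_entry_sum_swap24[of _ False True True False]
        quartic_entry_sum_swap13[of _ True False False True])
  have "haar_moment H False False False False =
      (337/625) * haar_moment H False False False False + (576/625) * haar_moment H False False True True"
    using haar_moment_rotation_3_4[of False False False False]
    by (simp add: UNIV_bool rotation_3_4_def zero phase_gate_def sym ne) (simp add: algebra_simps)
  with haar_moment_unitarity
  have "haar_moment H False False False False = 2/3" "haar_moment H False False True True = 1/3"
    by (simp_all add: field_simps)
  then show ?thesis
    by (cases a; cases b; cases c; cases d) (simp_all add: zero phase_gate_def u2_moment_def sym ne)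
qed

end

section \<open>Outcome probabilities of local measurements\<close>

lemma finite_qubits [simp]: "finite (qubits n)"
  by (simp add: qubits_def)

lemma sum_Pow_Un_disjoint:
  assumes "A \<inter> B = {}"
  shows "(\<Sum>x\<in>Pow (A \<union> B). f x) = (\<Sum>a\<in>Pow A. \<Sum>b\<in>Pow B. f (a \<union> b))"
proof -
  have "(\<Sum>x\<in>Pow (A \<union> B). f x) = (\<Sum>p\<in>Pow A \<times> Pow B. f (fst p \<union> snd p))"
    by (rule sum.reindex_bij_witness[of _ "\<lambda>p. fst p \<union> snd p" "\<lambda>x. (x \<inter> A, x \<inter> B)"])
       (use assms in \<open>auto intro!: arg_cong[where f=f]\<close>)
  then show ?thesis by (simp add: sum.cartesian_product case_prod_beta)
qed

lemma sum_Pow_prod_mem: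
  fixes h :: "'a \<Rightarrow> bool \<Rightarrow> 'b::comm_semiring_1"
  assumes "finite S"
  shows "(\<Sum>z\<in>Pow S. \<Prod>i\<in>S. h i (i \<in> z)) = (\<Prod>i\<in>S. \<Sum>t\<in>UNIV. h i t)"
proof -
  have split: "(\<Prod>i\<in>S. h i (i \<in> z)) = (\<Prod>i\<in>z. h i True) * (\<Prod>i\<in>S - z. h i False)"
    if "z \<subseteq> S" for z
  proof -
    have "(\<Prod>i\<in>S. h i (i \<in> z)) = (\<Prod>i\<in>S. if i \<in> z then h i True else h i False)"
      by (intro prod.cong) auto
    moreover have "S \<inter> {i. i \<in> z} = z" "S \<inter> - {i. i \<in> z} = S - z" using that by auto
    ultimately show ?thesis
      using prod.If_cases[OF assms, of "\<lambda>i. i \<in> z" "\<lambda>i. h i True" "\<lambda>i. h i False"] by simp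
  qed
  have "(\<Sum>z\<in>Pow S. \<Prod>i\<in>S. h i (i \<in> z)) =
      (\<Sum>z\<in>Pow S. (\<Prod>i\<in>z. h i True) * (\<Prod>i\<in>S - z. h i False))"
    by (intro sum.cong refl split) simp
  also have "\<dots> = (\<Prod>i\<in>S. h i True + h i False)"
    by (rule prod_add[OF assms, symmetric])
  also have "\<dots> = (\<Prod>i\<in>S. \<Sum>t\<in>UNIV. h i t)"
    by (simp add: UNIV_bool add.commute)
  finally show ?thesis .
qed

lemma prod_if_const:
  fixes c :: "'a::comm_semiring_1"
  assumes "finite X"
  shows "(\<Prod>i\<in>X. if Q i then c else 0) = (if \<forall>i\<in>X. Q i then c ^ card X else 0)"
proof (cases "\<forall>i\<in>X. Q i")
  case True
  then have "(\<Prod>i\<in>X. if Q i then c else 0) = (\<Prod>i\<in>X. c)" by (intro prod.cong) auto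
  then show ?thesis using True by simp
next
  case False
  then obtain x where "x \<in> X" "\<not> Q x" by auto
  then have "(\<Prod>i\<in>X. if Q i then c else 0) = 0" using assms by (intro prod_zero) auto
  then show ?thesis using \<open>x \<in> X\<close> \<open>\<not> Q x\<close> by auto
qed

definition local_entry :: "nat set \<Rightarrow> (nat \<Rightarrow> mat2) \<Rightarrow> nat set \<Rightarrow> nat set \<Rightarrow> complex" where
  "local_entry S u z w = (\<Prod>i\<in>S. u i $ (i \<in> z) $ (i \<in> w))"

lemma local_entry_Un_disjoint:
  assumes "c \<inter> S = {}"
  shows "local_entry S u (z \<union> c) w = local_entry S u z w"
  unfolding local_entry_def
proof (intro prod.cong refl)
  fix i assume "i \<in> S"
  with assms have "i \<notin> c" by blast
  then show "u i $ (i \<in> z \<union> c) $ (i \<in> w) = u i $ (i \<in> z) $ (i \<in> w)" by simp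
qed

lemma apply_local_eq:
  "apply_local n S u psi x = (\<Sum>w\<in>Pow S. local_entry S u x w * psi (w \<union> (x - S)))"
  unfolding apply_local_def local_entry_def ..

lemma outcome_prob_expand:
  assumes S: "S \<subseteq> qubits n" and z: "z \<subseteq> S"
  shows "complex_of_real (outcome_prob n S u psi z) =
    (\<Sum>p\<in>Pow S \<times> Pow S. local_entry S u z (fst p) * cnj (local_entry S u z (snd p)) *
       reduced_state n psi S (fst p) (snd p))"
proof -
  have "outcome_prob n S u psi z = (\<Sum>c\<in>Pow (qubits n - S). (cmod (apply_local n S u psi (z \<union> c)))\<^sup>2)"
    unfolding outcome_prob_def
    by (rule sum.reindex_bij_witness[of _ "\<lambda>c. z \<union> c" "\<lambda>x. x - S"])
       (use S z in \<open>auto simp: Int_Diff_Un\<close>)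
  also have "\<dots> = (\<Sum>c\<in>Pow (qubits n - S).
      (cmod (\<Sum>w\<in>Pow S. local_entry S u z w * psi (w \<union> c)))\<^sup>2)"
  proof (intro sum.cong refl)
    fix c assume "c \<in> Pow (qubits n - S)"
    then have "z \<union> c - S = c" "c \<inter> S = {}" using z by auto
    then show "(cmod (apply_local n S u psi (z \<union> c)))\<^sup>2 =
        (cmod (\<Sum>w\<in>Pow S. local_entry S u z w * psi (w \<union> c)))\<^sup>2"
      by (simp add: apply_local_eq local_entry_Un_disjoint)
  qed
  finally have "complex_of_real (outcome_prob n S u psi z) =
     (\<Sum>c\<in>Pow (qubits n - S). complex_of_real ((cmod (\<Sum>w\<in>Pow S. local_entry S u z w * psi (w \<union> c)))\<^sup>2))"
    by simp
  also have "\<dots> = (\<Sum>c\<in>Pow (qubits n - S). \<Sum>w1\<in>Pow S. \<Sum>w2\<in>Pow S.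
        local_entry S u z w1 * cnj (local_entry S u z w2) * (psi (w1 \<union> c) * cnj (psi (w2 \<union> c))))"
    by (simp only: complex_norm_square cnj_sum sum_product) (simp add: mult_ac)
  also have "\<dots> = (\<Sum>w1\<in>Pow S. \<Sum>w2\<in>Pow S.
      local_entry S u z w1 * cnj (local_entry S u z w2) * reduced_state n psi S w1 w2)"
    unfolding reduced_state_def sum_distrib_left
    by (subst sum.swap) (simp add: sum.swap[of _ "Pow (qubits n - S)"])
  finally show ?thesis by (simp add: sum.cartesian_product case_prod_beta)
qed

lemma sum_local_entry_quartic:
  assumes "finite S"
  shows "(\<Sum>z\<in>Pow S. local_entry S u z w1 * cnj (local_entry S u z w2) *
            (local_entry S u z w3 * cnj (local_entry S u z w4))) =
    (\<Prod>i\<in>S. quartic_entry_sum (u i) (i \<in> w1) (i \<in> w2) (i \<in> w3) (i \<in> w4))"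
  unfolding local_entry_def cnj_prod prod.distrib[symmetric] quartic_entry_sum_def
  using sum_Pow_prod_mem[OF assms, of "\<lambda>i t. u i $ t $ (i \<in> w1) * cnj (u i $ t $ (i \<in> w2)) *
         (u i $ t $ (i \<in> w3) * cnj (u i $ t $ (i \<in> w4)))"]
  by (simp add: mult.assoc)

lemma sum_local_entry_U2:
  assumes "finite S" and u: "\<And>i. i \<in> S \<Longrightarrow> u i \<in> U2" and "w1 \<subseteq> S" "w2 \<subseteq> S"
  shows "(\<Sum>z\<in>Pow S. local_entry S u z w1 * cnj (local_entry S u z w2)) = (if w1 = w2 then 1 else 0)"
proof -
  have "(\<Sum>z\<in>Pow S. local_entry S u z w1 * cnj (local_entry S u z w2)) =
      (\<Prod>i\<in>S. \<Sum>t\<in>UNIV. u i $ t $ (i \<in> w1) * cnj (u i $ t $ (i \<in> w2)))"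
    unfolding local_entry_def cnj_prod prod.distrib[symmetric]
    by (rule sum_Pow_prod_mem[OF assms(1)])
  also have "\<dots> = (\<Prod>i\<in>S. if (i \<in> w1) = (i \<in> w2) then 1 else 0)"
    by (intro prod.cong refl) (simp add: UNIV_bool U2_columns_orthonormal u add.commute)
  also have "\<dots> = (if w1 = w2 then 1 else 0)"
    using assms by (auto simp: prod_if_const)
  finally show ?thesis .
qed

lemma sum_outcome_prob_square_expand:
  assumes S: "S \<subseteq> qubits n"
  shows "complex_of_real (\<Sum>z\<in>Pow S. (outcome_prob n S u psi z)\<^sup>2) =
    (\<Sum>p\<in>Pow S \<times> Pow S. \<Sum>q\<in>Pow S \<times> Pow S.
       (\<Prod>i\<in>S. quartic_entry_sum (u i) (i \<in> fst p) (i \<in> snd p) (i \<in> fst q) (i \<in> snd q)) *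
       (reduced_state n psi S (fst p) (snd p) * reduced_state n psi S (fst q) (snd q)))"
proof -
  have fS: "finite S" using S by (rule finite_subset) simp
  let ?e = "local_entry S u" and ?r = "reduced_state n psi S"
  have "complex_of_real (\<Sum>z\<in>Pow S. (outcome_prob n S u psi z)\<^sup>2) =
     (\<Sum>z\<in>Pow S. \<Sum>p\<in>Pow S \<times> Pow S. \<Sum>q\<in>Pow S \<times> Pow S.
       (?e z (fst p) * cnj (?e z (snd p)) * (?e z (fst q) * cnj (?e z (snd q)))) *
       (?r (fst p) (snd p) * ?r (fst q) (snd q)))"
    unfolding of_real_sum of_real_power power2_eq_square
    by (intro sum.cong refl) (auto simp: outcome_prob_expand[OF S] sum_product mult_ac)
  also have "\<dots> = (\<Sum>p\<in>Pow S \<times> Pow S. \<Sum>q\<in>Pow S \<times> Pow S.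
       (\<Sum>z\<in>Pow S. ?e z (fst p) * cnj (?e z (snd p)) * (?e z (fst q) * cnj (?e z (snd q)))) *
       (?r (fst p) (snd p) * ?r (fst q) (snd q)))"
    by (simp add: sum.swap[where A="Pow S"] sum_distrib_right)
  finally show ?thesis by (simp only: sum_local_entry_quartic[OF fS])
qed

lemma trace_reduced_state:
  assumes S: "S \<subseteq> qubits n" and pure: "is_pure_state n psi"
  shows "(\<Sum>w\<in>Pow S. reduced_state n psi S w w) = 1"
proof -
  have "(\<Sum>w\<in>Pow S. reduced_state n psi S w w) =
      (\<Sum>x\<in>Pow (S \<union> (qubits n - S)). complex_of_real ((cmod (psi x))\<^sup>2))"
    unfolding reduced_state_def complex_norm_square by (rule sum_Pow_Un_disjoint[symmetric]) auto
  also have "S \<union> (qubits n - S) = qubits n" using S by auto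
  finally show ?thesis using pure unfolding is_pure_state_def by (metis of_real_1 of_real_sum)
qed

lemma sum_outcome_prob:
  assumes S: "S \<subseteq> qubits n" and pure: "is_pure_state n psi" and u: "\<And>i. i \<in> S \<Longrightarrow> u i \<in> U2"
  shows "(\<Sum>z\<in>Pow S. outcome_prob n S u psi z) = 1"
proof -
  have fS: "finite S" using S by (rule finite_subset) simp
  have "complex_of_real (\<Sum>z\<in>Pow S. outcome_prob n S u psi z) =
     (\<Sum>p\<in>Pow S \<times> Pow S. (\<Sum>z\<in>Pow S. local_entry S u z (fst p) * cnj (local_entry S u z (snd p))) *
        reduced_state n psi S (fst p) (snd p))"
    unfolding of_real_sum
    by (simp add: outcome_prob_expand[OF S] sum.swap[where A="Pow S"] sum_distrib_right)
  also have "\<dots> = (\<Sum>p\<in>Pow S \<times> Pow S. if fst p = snd p then reduced_state n psi S (fst p) (snd p) else 0)"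
  proof (intro sum.cong refl)
    fix p assume "p \<in> Pow S \<times> Pow S"
    then have "fst p \<subseteq> S" "snd p \<subseteq> S" by auto
    then show "(\<Sum>z\<in>Pow S. local_entry S u z (fst p) * cnj (local_entry S u z (snd p))) *
        reduced_state n psi S (fst p) (snd p) =
        (if fst p = snd p then reduced_state n psi S (fst p) (snd p) else 0)"
      by (simp add: sum_local_entry_U2[OF fS u])
  qed
  also have "\<dots> = (\<Sum>w1\<in>Pow S. \<Sum>w2\<in>Pow S. if w1 = w2 then reduced_state n psi S w1 w2 else 0)"
    by (simp add: sum.cartesian_product case_prod_beta)
  also have "\<dots> = (\<Sum>w\<in>Pow S. reduced_state n psi S w w)"
    by (simp add: fS)
  also have "\<dots> = 1" by (rule trace_reduced_state[OF S pure])
  finally show ?thesis by (metis of_real_eq_1_iff)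
qed

section \<open>Purities as swap contractions\<close>

lemma sum_reduced_state_partial_trace:
  assumes aS: "\<alpha> \<subseteq> S" and S: "S \<subseteq> qubits n"
  shows "(\<Sum>p\<in>Pow S \<times> Pow S. if fst p - \<alpha> = snd p - \<alpha>
            then reduced_state n psi S (fst p) (snd p) * G (fst p \<inter> \<alpha>) (snd p \<inter> \<alpha>) else 0) =
    (\<Sum>a\<in>Pow \<alpha>. \<Sum>b\<in>Pow \<alpha>. reduced_state n psi \<alpha> a b * G a b)"
proof -
  let ?r = "reduced_state n psi S"
  have fS: "finite S" using S by (rule finite_subset) simp
  have split: "(\<Sum>w\<in>Pow S. g w) = (\<Sum>a\<in>Pow \<alpha>. \<Sum>e\<in>Pow (S - \<alpha>). g (a \<union> e))" for g
    using sum_Pow_Un_disjoint[of \<alpha> "S - \<alpha>" g] aS by (simp add: Un_absorb1)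
  have trace: "(\<Sum>e\<in>Pow (S - \<alpha>). ?r (a \<union> e) (b \<union> e)) = reduced_state n psi \<alpha> a b" for a b
  proof -
    have "(S - \<alpha>) \<union> (qubits n - S) = qubits n - \<alpha>" using aS S by auto
    then have "reduced_state n psi \<alpha> a b =
        (\<Sum>x\<in>Pow ((S - \<alpha>) \<union> (qubits n - S)). psi (a \<union> x) * cnj (psi (b \<union> x)))"
      unfolding reduced_state_def by simp
    also have "\<dots> = (\<Sum>e\<in>Pow (S - \<alpha>). ?r (a \<union> e) (b \<union> e))"
      unfolding reduced_state_def by (subst sum_Pow_Un_disjoint) (auto simp: Un_assoc)
    finally show ?thesis by simp
  qed
  let ?F = "\<lambda>w1 w2. if w1 - \<alpha> = w2 - \<alpha> then ?r w1 w2 * G (w1 \<inter> \<alpha>) (w2 \<inter> \<alpha>) else 0"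
  have "(\<Sum>p\<in>Pow S \<times> Pow S. ?F (fst p) (snd p)) = (\<Sum>w1\<in>Pow S. \<Sum>w2\<in>Pow S. ?F w1 w2)"
    by (simp add: sum.cartesian_product case_prod_beta)
  also have "\<dots> =
      (\<Sum>a\<in>Pow \<alpha>. \<Sum>e\<in>Pow (S - \<alpha>). \<Sum>b\<in>Pow \<alpha>. \<Sum>f\<in>Pow (S - \<alpha>). ?F (a \<union> e) (b \<union> f))"
    by (simp only: split)
  also have "\<dots> = (\<Sum>a\<in>Pow \<alpha>. \<Sum>e\<in>Pow (S - \<alpha>). \<Sum>b\<in>Pow \<alpha>. \<Sum>f\<in>Pow (S - \<alpha>).
       if e = f then ?r (a \<union> e) (b \<union> f) * G a b else 0)"
  proof (intro sum.cong refl)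
    fix a e b f assume "a \<in> Pow \<alpha>" "e \<in> Pow (S - \<alpha>)" "b \<in> Pow \<alpha>" "f \<in> Pow (S - \<alpha>)"
    then have "a \<union> e - \<alpha> = e" "b \<union> f - \<alpha> = f" "(a \<union> e) \<inter> \<alpha> = a" "(b \<union> f) \<inter> \<alpha> = b" by auto
    then show "?F (a \<union> e) (b \<union> f) = (if e = f then ?r (a \<union> e) (b \<union> f) * G a b else 0)"
      by (simp only:)
  qed
  also have "\<dots> = (\<Sum>a\<in>Pow \<alpha>. \<Sum>b\<in>Pow \<alpha>. (\<Sum>e\<in>Pow (S - \<alpha>). ?r (a \<union> e) (b \<union> e)) * G a b)"
    by (simp add: fS sum.swap[of _ "Pow (S - \<alpha>)"] sum_distrib_right)
  finally show ?thesis by (simp add: trace)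
qed

text \<open>\<open>swap_on \<alpha> p q\<close>: the index pairs \<open>p\<close> and \<open>q\<close> of two copies of \<open>\<rho>\<^sub>S\<close> are contracted
  by the permutation that swaps the copies on \<open>\<alpha>\<close> and fixes them elsewhere.\<close>

definition swap_on :: "nat set \<Rightarrow> nat set \<times> nat set \<Rightarrow> nat set \<times> nat set \<Rightarrow> bool" where
  "swap_on \<alpha> p q \<longleftrightarrow> fst p \<inter> \<alpha> = snd q \<inter> \<alpha> \<and> fst q \<inter> \<alpha> = snd p \<inter> \<alpha> \<and>
     fst p - \<alpha> = snd p - \<alpha> \<and> fst q - \<alpha> = snd q - \<alpha>"

lemma sum_swap_on_reduced_state:
  assumes aS: "\<alpha> \<subseteq> S" and S: "S \<subseteq> qubits n"
  shows "(\<Sum>p\<in>Pow S \<times> Pow S. \<Sum>q\<in>Pow S \<times> Pow S. if swap_on \<alpha> p q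
            then reduced_state n psi S (fst p) (snd p) * reduced_state n psi S (fst q) (snd q) else 0) =
    (\<Sum>a\<in>Pow \<alpha>. \<Sum>b\<in>Pow \<alpha>. reduced_state n psi \<alpha> a b * reduced_state n psi \<alpha> b a)"
proof -
  let ?r = "reduced_state n psi S"
  have fa: "finite \<alpha>" using aS S by (meson finite_qubits finite_subset)
  have delta2: "(\<Sum>a\<in>Pow \<alpha>. \<Sum>b\<in>Pow \<alpha>. if a = x \<and> b = y then c else 0) = c"
    if "x \<subseteq> \<alpha>" "y \<subseteq> \<alpha>" for x y and c :: complex
  proof -
    have "(\<Sum>b\<in>Pow \<alpha>. if a = x \<and> b = y then c else 0) = (if a = x then c else 0)" for a
      using that fa by (cases "a = x") simp_all
    then show ?thesis using that fa by simp
  qed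
  have inner: "(\<Sum>q\<in>Pow S \<times> Pow S. if swap_on \<alpha> p q then ?r (fst p) (snd p) * ?r (fst q) (snd q) else 0) =
      (if fst p - \<alpha> = snd p - \<alpha>
       then ?r (fst p) (snd p) * reduced_state n psi \<alpha> (snd p \<inter> \<alpha>) (fst p \<inter> \<alpha>) else 0)" for p
  proof (cases "fst p - \<alpha> = snd p - \<alpha>")
    case True
    define G where "G a b = (if a = snd p \<inter> \<alpha> \<and> b = fst p \<inter> \<alpha> then 1 else (0::complex))" for a b
    have "(\<Sum>q\<in>Pow S \<times> Pow S. if swap_on \<alpha> p q then ?r (fst p) (snd p) * ?r (fst q) (snd q) else 0) =
        ?r (fst p) (snd p) * (\<Sum>q\<in>Pow S \<times> Pow S. if fst q - \<alpha> = snd q - \<alpha>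
          then ?r (fst q) (snd q) * G (fst q \<inter> \<alpha>) (snd q \<inter> \<alpha>) else 0)"
      unfolding sum_distrib_left using True by (intro sum.cong refl) (auto simp: G_def swap_on_def)
    also have "\<dots> = ?r (fst p) (snd p) * (\<Sum>a\<in>Pow \<alpha>. \<Sum>b\<in>Pow \<alpha>. reduced_state n psi \<alpha> a b * G a b)"
      by (simp only: sum_reduced_state_partial_trace[OF aS S])
    also have "(\<Sum>a\<in>Pow \<alpha>. \<Sum>b\<in>Pow \<alpha>. reduced_state n psi \<alpha> a b * G a b) =
        reduced_state n psi \<alpha> (snd p \<inter> \<alpha>) (fst p \<inter> \<alpha>)"
      unfolding G_def by (simp add: if_distrib[of "\<lambda>x. _ * x"] delta2 cong: if_cong)
    finally show ?thesis using True by simp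
  qed (simp add: swap_on_def)
  have "(\<Sum>p\<in>Pow S \<times> Pow S. \<Sum>q\<in>Pow S \<times> Pow S. if swap_on \<alpha> p q then ?r (fst p) (snd p) * ?r (fst q) (snd q) else 0) =
      (\<Sum>p\<in>Pow S \<times> Pow S. if fst p - \<alpha> = snd p - \<alpha> then ?r (fst p) (snd p) *
         (\<lambda>a b. reduced_state n psi \<alpha> b a) (fst p \<inter> \<alpha>) (snd p \<inter> \<alpha>) else 0)"
    by (simp only: inner)
  also have "\<dots> = (\<Sum>a\<in>Pow \<alpha>. \<Sum>b\<in>Pow \<alpha>. reduced_state n psi \<alpha> a b * reduced_state n psi \<alpha> b a)"
    by (rule sum_reduced_state_partial_trace[OF aS S])
  finally show ?thesis .
qed

text \<open>Expanding the product of \<open>u2_moment\<close> over the qubits of \<open>S\<close> chooses, qubit by qubit,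
  between the swap and the identity contraction; this is the Weingarten calculus for \<open>U(2)\<close>.\<close>

lemma prod_u2_moment:
  assumes fS: "finite S" and p: "p \<in> Pow S \<times> Pow S" and q: "q \<in> Pow S \<times> Pow S"
  shows "(\<Prod>i\<in>S. u2_moment (i \<in> fst p) (i \<in> snd p) (i \<in> fst q) (i \<in> snd q)) =
    (1/3) ^ card S * (\<Sum>\<alpha>\<in>Pow S. if swap_on \<alpha> p q then 1 else 0)"
proof -
  define f1 where "f1 i = (if (i \<in> fst p) = (i \<in> snd q) \<and> (i \<in> fst q) = (i \<in> snd p) then 1/3 else (0::complex))" for i
  define f2 where "f2 i = (if (i \<in> fst p) = (i \<in> snd p) \<and> (i \<in> fst q) = (i \<in> snd q) then 1/3 else (0::complex))" for i
  have "(\<Prod>i\<in>S. u2_moment (i \<in> fst p) (i \<in> snd p) (i \<in> fst q) (i \<in> snd q)) = (\<Prod>i\<in>S. f1 i + f2 i)"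
    unfolding u2_moment_def f1_def f2_def by (intro prod.cong refl) (auto simp: add.commute)
  also have "\<dots> = (\<Sum>\<alpha>\<in>Pow S. (\<Prod>i\<in>\<alpha>. f1 i) * (\<Prod>i\<in>S - \<alpha>. f2 i))"
    by (rule prod_add[OF fS])
  also have "\<dots> = (\<Sum>\<alpha>\<in>Pow S. (1/3) ^ card S * (if swap_on \<alpha> p q then 1 else 0))"
  proof (rule sum.cong[OF refl])
    fix \<alpha> assume "\<alpha> \<in> Pow S"
    then have a: "\<alpha> \<subseteq> S" and fa: "finite \<alpha>" using fS finite_subset by auto
    have "(\<forall>i\<in>\<alpha>. (i \<in> fst p) = (i \<in> snd q) \<and> (i \<in> fst q) = (i \<in> snd p)) \<longleftrightarrow>
        fst p \<inter> \<alpha> = snd q \<inter> \<alpha> \<and> fst q \<inter> \<alpha> = snd p \<inter> \<alpha>"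
      by blast
    moreover have "(\<forall>i\<in>S - \<alpha>. (i \<in> fst p) = (i \<in> snd p) \<and> (i \<in> fst q) = (i \<in> snd q)) \<longleftrightarrow>
        fst p - \<alpha> = snd p - \<alpha> \<and> fst q - \<alpha> = snd q - \<alpha>"
    proof -
      have "(\<forall>i\<in>S - \<alpha>. (i \<in> A) = (i \<in> B)) \<longleftrightarrow> A - \<alpha> = B - \<alpha>" if "A \<subseteq> S" "B \<subseteq> S" for A B
        using that by auto
      moreover have "fst p \<subseteq> S" "snd p \<subseteq> S" "fst q \<subseteq> S" "snd q \<subseteq> S" using p q by auto
      ultimately show ?thesis by (simp add: ball_conj_distrib)
    qed
    moreover have "card \<alpha> + card (S - \<alpha>) = card S"
      using card_Diff_subset[OF fa a] card_mono[OF fS a] by simp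
    ultimately show "(\<Prod>i\<in>\<alpha>. f1 i) * (\<Prod>i\<in>S - \<alpha>. f2 i) = (1/3) ^ card S * (if swap_on \<alpha> p q then 1 else 0)"
      unfolding f1_def f2_def prod_if_const[OF fa] prod_if_const[OF finite_Diff[OF fS]] swap_on_def
      by (simp add: power_add[symmetric])
  qed
  finally show ?thesis by (simp add: sum_distrib_left)
qed

lemma sum_u2_moment_reduced_state:
  assumes S: "S \<subseteq> qubits n"
  shows "(\<Sum>p\<in>Pow S \<times> Pow S. \<Sum>q\<in>Pow S \<times> Pow S.
       (\<Prod>i\<in>S. u2_moment (i \<in> fst p) (i \<in> snd p) (i \<in> fst q) (i \<in> snd q)) *
       (reduced_state n psi S (fst p) (snd p) * reduced_state n psi S (fst q) (snd q))) =
    (1/3) ^ card S * (\<Sum>\<alpha>\<in>Pow S. \<Sum>a\<in>Pow \<alpha>. \<Sum>b\<in>Pow \<alpha>.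
       reduced_state n psi \<alpha> a b * reduced_state n psi \<alpha> b a)"
proof -
  let ?r = "reduced_state n psi S"
  have fS: "finite S" using S by (rule finite_subset) simp
  have "(\<Sum>p\<in>Pow S \<times> Pow S. \<Sum>q\<in>Pow S \<times> Pow S.
       (\<Prod>i\<in>S. u2_moment (i \<in> fst p) (i \<in> snd p) (i \<in> fst q) (i \<in> snd q)) * (?r (fst p) (snd p) * ?r (fst q) (snd q))) =
    (\<Sum>p\<in>Pow S \<times> Pow S. \<Sum>q\<in>Pow S \<times> Pow S. (1/3) ^ card S *
       (\<Sum>\<alpha>\<in>Pow S. if swap_on \<alpha> p q then ?r (fst p) (snd p) * ?r (fst q) (snd q) else 0))"
    by (intro sum.cong refl)
       (simp add: prod_u2_moment[OF fS] sum_distrib_right mult.assoc if_distrib[of "\<lambda>x. x * _"] cong: if_cong)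
  also have "\<dots> = (1/3) ^ card S * (\<Sum>\<alpha>\<in>Pow S. \<Sum>p\<in>Pow S \<times> Pow S. \<Sum>q\<in>Pow S \<times> Pow S.
       if swap_on \<alpha> p q then ?r (fst p) (snd p) * ?r (fst q) (snd q) else 0)"
    by (simp add: sum_distrib_left sum.swap[of _ "Pow S"])
  also have "\<dots> = (1/3) ^ card S * (\<Sum>\<alpha>\<in>Pow S. \<Sum>a\<in>Pow \<alpha>. \<Sum>b\<in>Pow \<alpha>.
       reduced_state n psi \<alpha> a b * reduced_state n psi \<alpha> b a)"
    using S by (simp add: sum_swap_on_reduced_state)
  finally show ?thesis .
qed

lemma reduced_state_cnj: "reduced_state n psi \<alpha> b a = cnj (reduced_state n psi \<alpha> a b)"
  unfolding reduced_state_def cnj_sum by (rule sum.cong[OF refl]) (simp add: mult.commute)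

lemma trace_square_reduced_state:
  "(\<Sum>a\<in>Pow \<alpha>. \<Sum>b\<in>Pow \<alpha>. reduced_state n psi \<alpha> a b * reduced_state n psi \<alpha> b a) =
    complex_of_real (\<Sum>a\<in>Pow \<alpha>. \<Sum>b\<in>Pow \<alpha>. (cmod (reduced_state n psi \<alpha> a b))\<^sup>2)"
  unfolding of_real_sum
proof (intro sum.cong refl)
  fix a b
  show "reduced_state n psi \<alpha> a b * reduced_state n psi \<alpha> b a =
      complex_of_real ((cmod (reduced_state n psi \<alpha> a b))\<^sup>2)"
    unfolding reduced_state_cnj[of n psi \<alpha> b a] complex_norm_square ..
qed

lemma purity_eq_sum_norm_square:
  assumes "is_pure_state n psi"
  shows "purity n psi \<alpha> = (\<Sum>a\<in>Pow \<alpha>. \<Sum>b\<in>Pow \<alpha>. (cmod (reduced_state n psi \<alpha> a b))\<^sup>2)"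
proof (cases "\<alpha> = {}")
  case True
  have "reduced_state n psi {} {} {} = (\<Sum>c\<in>Pow (qubits n). complex_of_real ((cmod (psi c))\<^sup>2))"
    unfolding reduced_state_def complex_norm_square by simp
  also have "\<dots> = 1" using assms unfolding is_pure_state_def by (metis of_real_1 of_real_sum)
  finally show ?thesis using True by (simp add: purity_def)
qed (simp add: purity_def trace_square_reduced_state)

lemma purity_nonneg: "is_pure_state n psi \<Longrightarrow> 0 \<le> purity n psi \<alpha>"
  by (simp add: purity_eq_sum_norm_square sum_nonneg)

lemma purity_le_1:
  assumes \<alpha>: "\<alpha> \<subseteq> qubits n" and pure: "is_pure_state n psi"
  shows "purity n psi \<alpha> \<le> 1"
proof -
  let ?R = "qubits n - \<alpha>" and ?r = "reduced_state n psi \<alpha>"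
  define d where "d a = (\<Sum>c\<in>Pow ?R. (cmod (psi (a \<union> c)))\<^sup>2)" for a
  have "(cmod (?r a b))\<^sup>2 \<le> d a * d b" for a b
  proof -
    have "cmod (?r a b) \<le> (\<Sum>c\<in>Pow ?R. cmod (psi (a \<union> c)) * cmod (psi (b \<union> c)))"
      unfolding reduced_state_def by (rule order_trans[OF norm_sum]) (simp add: norm_mult)
    then have "(cmod (?r a b))\<^sup>2 \<le> (\<Sum>c\<in>Pow ?R. cmod (psi (a \<union> c)) * cmod (psi (b \<union> c)))\<^sup>2"
      by (intro power_mono) simp_all
    also have "\<dots> \<le> d a * d b" unfolding d_def by (rule Cauchy_Schwarz_ineq_sum)
    finally show ?thesis .
  qed
  then have "purity n psi \<alpha> \<le> (\<Sum>a\<in>Pow \<alpha>. \<Sum>b\<in>Pow \<alpha>. d a * d b)"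
    unfolding purity_eq_sum_norm_square[OF pure] by (intro sum_mono)
  also have "\<dots> = (\<Sum>a\<in>Pow \<alpha>. d a)\<^sup>2" by (simp add: power2_eq_square sum_product)
  also have "(\<Sum>a\<in>Pow \<alpha>. d a) = (\<Sum>x\<in>Pow (\<alpha> \<union> ?R). (cmod (psi x))\<^sup>2)"
    unfolding d_def by (rule sum_Pow_Un_disjoint[symmetric]) auto
  also have "\<alpha> \<union> ?R = qubits n" using \<alpha> by auto
  finally show ?thesis using pure by (simp add: is_pure_state_def)
qed

section \<open>The collision probability under random local unitaries\<close>

definition mean_collision_prob :: "nat \<Rightarrow> (nat set \<Rightarrow> complex) \<Rightarrow> nat set \<Rightarrow> real" where
  "mean_collision_prob n psi S = (1/3) ^ card S * (\<Sum>\<alpha>\<in>Pow S. purity n psi \<alpha>)"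

lemma sum_purity_le:
  assumes S: "S \<subseteq> qubits n" and pure: "is_pure_state n psi"
  shows "(\<Sum>\<alpha>\<in>Pow S. purity n psi \<alpha>) \<le> 2 ^ card S"
proof -
  have fS: "finite S" using S by (rule finite_subset) simp
  have "(\<Sum>\<alpha>\<in>Pow S. purity n psi \<alpha>) \<le> (\<Sum>\<alpha>\<in>Pow S. 1)"
    using S by (intro sum_mono purity_le_1[OF _ pure]) auto
  then show ?thesis by (simp add: card_Pow fS)
qed

lemma mean_collision_prob_nonneg: "is_pure_state n psi \<Longrightarrow> 0 \<le> mean_collision_prob n psi S"
  unfolding mean_collision_prob_def by (simp add: sum_nonneg purity_nonneg)

lemma scaled_mean_collision_prob_le_1:
  assumes "S \<subseteq> qubits n" and "is_pure_state n psi"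
  shows "(3/2) ^ card S * mean_collision_prob n psi S \<le> 1"
proof -
  have "(3/2) ^ card S * mean_collision_prob n psi S = (\<Sum>\<alpha>\<in>Pow S. purity n psi \<alpha>) / 2 ^ card S"
    unfolding mean_collision_prob_def by (simp add: power_divide field_simps)
  then show ?thesis using sum_purity_le[OF assms] by simp
qed

lemma mean_collision_prob_le_1:
  assumes "S \<subseteq> qubits n" and "is_pure_state n psi"
  shows "mean_collision_prob n psi S \<le> 1"
proof -
  have "1 * mean_collision_prob n psi S \<le> (3/2) ^ card S * mean_collision_prob n psi S"
    using mean_collision_prob_nonneg[OF assms(2)] by (intro mult_right_mono) simp_all
  then show ?thesis using scaled_mean_collision_prob_le_1[OF assms] by simp
qed

lemma conc_ent_eq: "conc_ent n psi S = 1 - (3/2) ^ card S * mean_collision_prob n psi S"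
  unfolding conc_ent_def mean_collision_prob_def by (simp add: power_divide field_simps)

definition agree_prob :: "nat \<Rightarrow> nat set \<Rightarrow> (nat set \<Rightarrow> complex) \<Rightarrow> (nat \<Rightarrow> mat2) \<Rightarrow> bool \<Rightarrow> real" where
  "agree_prob n S psi u t = (\<Sum>z\<in>Pow S. \<Sum>z'\<in>Pow S.
     if t = (z = z') then outcome_prob n S u psi z * outcome_prob n S u psi z' else 0)"

lemma outcome_prob_nonneg: "0 \<le> outcome_prob n S u psi z"
  unfolding outcome_prob_def by (intro sum_nonneg) simp

lemma agree_prob_nonneg: "0 \<le> agree_prob n S psi u t"
  unfolding agree_prob_def by (auto intro!: sum_nonneg mult_nonneg_nonneg outcome_prob_nonneg)

lemma agree_prob_True:
  "finite S \<Longrightarrow> agree_prob n S psi u True = (\<Sum>z\<in>Pow S. (outcome_prob n S u psi z)\<^sup>2)"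
  unfolding agree_prob_def by (simp add: power2_eq_square)

lemma agree_prob_False:
  assumes "finite S"
  shows "agree_prob n S psi u False = (\<Sum>z\<in>Pow S. outcome_prob n S u psi z)\<^sup>2 - agree_prob n S psi u True"
proof -
  have "(\<Sum>z\<in>Pow S. outcome_prob n S u psi z)\<^sup>2 =
      (\<Sum>z\<in>Pow S. \<Sum>z'\<in>Pow S. outcome_prob n S u psi z * outcome_prob n S u psi z')"
    by (simp add: power2_eq_square sum_product)
  also have "\<dots> = agree_prob n S psi u False + agree_prob n S psi u True"
    unfolding agree_prob_def sum.distrib[symmetric] by (intro sum.cong refl) simp
  finally show ?thesis by simp
qed

lemma outcome_prob_cong:
  "(\<And>i. i \<in> S \<Longrightarrow> u i = u' i) \<Longrightarrow> outcome_prob n S u psi z = outcome_prob n S u' psi z"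
  unfolding outcome_prob_def apply_local_def
  by (intro sum.cong refl arg_cong[where f="\<lambda>x. (cmod x)\<^sup>2"] arg_cong2[where f="(*)"] prod.cong) auto

lemma agree_prob_cong:
  assumes "\<And>i. i \<in> S \<Longrightarrow> u i = u' i"
  shows "agree_prob n S psi u t = agree_prob n S psi u' t"
proof -
  have eq: "outcome_prob n S u psi z = outcome_prob n S u' psi z" for z
    using assms by (rule outcome_prob_cong)
  show ?thesis unfolding agree_prob_def eq ..
qed

lemma borel_measurable_outcome_prob:
  fixes H :: "mat2 measure"
  assumes "sets H = sets borel" and "{l} \<times> S \<subseteq> K"
  shows "(\<lambda>U. outcome_prob n S (\<lambda>i. U (l, i)) psi z) \<in> borel_measurable (Pi\<^sub>M K (\<lambda>_. H))"
proof -
  have "(\<lambda>U. U (l, i)) \<in> borel_measurable (Pi\<^sub>M K (\<lambda>_. H))" if "i \<in> S" for i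
    using measurable_component_singleton[of "(l, i)" K "\<lambda>_. H"] that assms
    by (auto simp: measurable_cong_sets[OF refl assms(1)])
  then have "(\<lambda>U. U (l, i) $ a $ b) \<in> borel_measurable (Pi\<^sub>M K (\<lambda>_. H))" if "i \<in> S" for i a b
    using that by (intro borel_measurable_continuous_on[where f="\<lambda>A. A $ a $ b"] continuous_intros)
  then show ?thesis
    unfolding outcome_prob_def apply_local_def by measurable
qed

lemma borel_measurable_agree_prob:
  fixes H :: "mat2 measure"
  assumes "sets H = sets borel" and "{l} \<times> S \<subseteq> K"
  shows "(\<lambda>U. agree_prob n S psi (\<lambda>i. U (l, i)) t) \<in> borel_measurable (Pi\<^sub>M K (\<lambda>_. H))"
  unfolding agree_prob_def
proof (intro borel_measurable_sum)
  fix z z'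
  show "(\<lambda>U. if t = (z = z') then outcome_prob n S (\<lambda>i. U (l, i)) psi z *
      outcome_prob n S (\<lambda>i. U (l, i)) psi z' else 0) \<in> borel_measurable (Pi\<^sub>M K (\<lambda>_. H))"
    by (cases "t = (z = z')") (simp_all add: borel_measurable_times borel_measurable_outcome_prob[OF assms])
qed

lemma prod_Times_singleton: "(\<Prod>k\<in>{l} \<times> S. g k) = (\<Prod>i\<in>S. g (l, i))"
proof -
  have "{l} \<times> S = Pair l ` S" by auto
  moreover have "inj_on (Pair l) S" by (auto simp: inj_on_def)
  ultimately show ?thesis by (simp add: prod.reindex)
qed

lemma nn_integral_prod_blocks:
  fixes M :: "'m measure" and F :: "'l \<Rightarrow> ('i \<Rightarrow> 'm) \<Rightarrow> ennreal"
  assumes M: "prob_space M" and I: "finite I" and S: "finite S"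
    and cong: "\<And>l u u'. (\<And>i. i \<in> S \<Longrightarrow> u i = u' i) \<Longrightarrow> F l u = F l u'"
    and meas: "\<And>l K. {l} \<times> S \<subseteq> K \<Longrightarrow> (\<lambda>U. F l (\<lambda>i. U (l, i))) \<in> borel_measurable (Pi\<^sub>M K (\<lambda>_. M))"
  shows "(\<integral>\<^sup>+U. (\<Prod>l\<in>I. F l (\<lambda>i. U (l, i))) \<partial>Pi\<^sub>M (I \<times> S) (\<lambda>_. M)) =
    (\<Prod>l\<in>I. \<integral>\<^sup>+U. F l (\<lambda>i. U (l, i)) \<partial>Pi\<^sub>M ({l} \<times> S) (\<lambda>_. M))"
  using I
proof (induction I rule: finite_induct)
  case empty
  interpret prob_space "Pi\<^sub>M {} (\<lambda>_. M)" by (rule prob_space_PiM) (rule M)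
  show ?case by (simp add: emeasure_space_1)
next
  case (insert a I)
  interpret product_sigma_finite "\<lambda>_. M"
    unfolding product_sigma_finite_def using M prob_space_imp_sigma_finite by blast
  let ?I = "I \<times> S" and ?J = "{a} \<times> S"
  have IJ: "?I \<inter> ?J = {}" using insert.hyps by auto
  have U: "insert a I \<times> S = ?I \<union> ?J" by auto
  let ?A = "\<lambda>U. \<Prod>l\<in>I. F l (\<lambda>i. U (l, i))" and ?B = "\<lambda>U. F a (\<lambda>i. U (a, i))"
  have mA: "?A \<in> borel_measurable (Pi\<^sub>M ?I (\<lambda>_. M))"
    by (intro borel_measurable_prod_ennreal meas) auto
  have mB: "?B \<in> borel_measurable (Pi\<^sub>M ?J (\<lambda>_. M))"
    by (intro meas) auto
  have merge: "?A (merge ?I ?J (x, y)) * ?B (merge ?I ?J (x, y)) = ?A x * ?B y" for x y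
  proof -
    have "F l (\<lambda>i. merge ?I ?J (x, y) (l, i)) = F l (\<lambda>i. x (l, i))" if "l \<in> I" for l
      using that by (intro cong) (simp add: merge_def)
    moreover have "F a (\<lambda>i. merge ?I ?J (x, y) (a, i)) = F a (\<lambda>i. y (a, i))"
      using insert.hyps by (intro cong) (simp add: merge_def)
    ultimately show ?thesis by (metis (no_types, lifting) prod.cong)
  qed
  have "(\<integral>\<^sup>+U. (\<Prod>l\<in>insert a I. F l (\<lambda>i. U (l, i))) \<partial>Pi\<^sub>M (insert a I \<times> S) (\<lambda>_. M)) =
      (\<integral>\<^sup>+U. ?A U * ?B U \<partial>Pi\<^sub>M (?I \<union> ?J) (\<lambda>_. M))"
    unfolding U using insert.hyps by (simp add: mult.commute)
  also have "\<dots> = (\<integral>\<^sup>+x. \<integral>\<^sup>+y. ?A x * ?B y \<partial>Pi\<^sub>M ?J (\<lambda>_. M) \<partial>Pi\<^sub>M ?I (\<lambda>_. M))"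
    using insert.hyps S mA mB
    by (subst product_nn_integral_fold[OF IJ])
       (auto simp: merge intro!: borel_measurable_times_ennreal borel_measurable_prod_ennreal meas)
  also have "\<dots> = (\<integral>\<^sup>+x. ?A x \<partial>Pi\<^sub>M ?I (\<lambda>_. M)) * (\<integral>\<^sup>+y. ?B y \<partial>Pi\<^sub>M ?J (\<lambda>_. M))"
    by (simp add: nn_integral_cmult[OF mB] nn_integral_multc[OF mA])
  finally show ?case using insert by (simp add: mult.commute)
qed

context
  fixes H :: "mat2 measure"
  assumes haar: "haar_U2 H"
begin

lemma AE_PiM_haar_U2:
  assumes "finite S" and "{l} \<times> S \<subseteq> K"
  shows "AE U in Pi\<^sub>M K (\<lambda>_. H). \<forall>i\<in>S. U (l, i) \<in> U2"
proof -
  have "\<forall>i\<in>S. AE U in Pi\<^sub>M K (\<lambda>_. H). U (l, i) \<in> U2"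
    using assms by (auto intro!: AE_PiM_component prob_space_haar[OF haar] AE_haar_U2[OF haar])
  then show ?thesis using assms by (simp add: eventually_ball_finite)
qed

lemma integral_prod_quartic_entry_sum:
  fixes l :: nat
  assumes "finite S"
  shows "integrable (Pi\<^sub>M ({l} \<times> S) (\<lambda>_. H))
      (\<lambda>U. \<Prod>i\<in>S. quartic_entry_sum (U (l, i)) (i \<in> w1) (i \<in> w2) (i \<in> w3) (i \<in> w4))"
    and "(\<integral>U. (\<Prod>i\<in>S. quartic_entry_sum (U (l, i)) (i \<in> w1) (i \<in> w2) (i \<in> w3) (i \<in> w4))
        \<partial>Pi\<^sub>M ({l} \<times> S) (\<lambda>_. H)) = (\<Prod>i\<in>S. u2_moment (i \<in> w1) (i \<in> w2) (i \<in> w3) (i \<in> w4))"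
proof -
  interpret product_sigma_finite "\<lambda>_. H"
    unfolding product_sigma_finite_def using prob_space_haar[OF haar] prob_space_imp_sigma_finite by blast
  let ?q = "\<lambda>k A. quartic_entry_sum A (snd k \<in> w1) (snd k \<in> w2) (snd k \<in> w3) (snd k \<in> w4)"
  have eq: "(\<lambda>U. \<Prod>i\<in>S. quartic_entry_sum (U (l, i)) (i \<in> w1) (i \<in> w2) (i \<in> w3) (i \<in> w4)) =
      (\<lambda>U. \<Prod>k\<in>{l} \<times> S. ?q k (U k))"
    by (simp add: prod_Times_singleton)
  show "integrable (Pi\<^sub>M ({l} \<times> S) (\<lambda>_. H))
      (\<lambda>U. \<Prod>i\<in>S. quartic_entry_sum (U (l, i)) (i \<in> w1) (i \<in> w2) (i \<in> w3) (i \<in> w4))"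
    unfolding eq by (rule product_integrable_prod) (simp_all add: assms integrable_quartic_entry_sum[OF haar])
  have "(\<integral>U. (\<Prod>k\<in>{l} \<times> S. ?q k (U k)) \<partial>Pi\<^sub>M ({l} \<times> S) (\<lambda>_. H)) =
      (\<Prod>k\<in>{l} \<times> S. haar_moment H (snd k \<in> w1) (snd k \<in> w2) (snd k \<in> w3) (snd k \<in> w4))"
    unfolding haar_moment_def
    by (rule product_integral_prod) (simp_all add: assms integrable_quartic_entry_sum[OF haar])
  then show "(\<integral>U. (\<Prod>i\<in>S. quartic_entry_sum (U (l, i)) (i \<in> w1) (i \<in> w2) (i \<in> w3) (i \<in> w4))
      \<partial>Pi\<^sub>M ({l} \<times> S) (\<lambda>_. H)) = (\<Prod>i\<in>S. u2_moment (i \<in> w1) (i \<in> w2) (i \<in> w3) (i \<in> w4))"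
    unfolding eq by (simp add: haar_moment_eq[OF haar] prod_Times_singleton)
qed

lemma integral_collision_prob:
  fixes l :: nat
  assumes S: "S \<subseteq> qubits n" and pure: "is_pure_state n psi"
  shows "integrable (Pi\<^sub>M ({l} \<times> S) (\<lambda>_. H)) (\<lambda>U. \<Sum>z\<in>Pow S. (outcome_prob n S (\<lambda>i. U (l, i)) psi z)\<^sup>2)"
    and "(\<integral>U. (\<Sum>z\<in>Pow S. (outcome_prob n S (\<lambda>i. U (l, i)) psi z)\<^sup>2) \<partial>Pi\<^sub>M ({l} \<times> S) (\<lambda>_. H)) =
      mean_collision_prob n psi S"
proof -
  have fS: "finite S" using S by (rule finite_subset) simp
  let ?r = "reduced_state n psi S" and ?M = "Pi\<^sub>M ({l} \<times> S) (\<lambda>_. H)"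
  let ?f = "\<lambda>U. \<Sum>z\<in>Pow S. (outcome_prob n S (\<lambda>i. U (l, i)) psi z)\<^sup>2"
  let ?T = "\<lambda>p q U. \<Prod>i\<in>S. quartic_entry_sum (U (l, i)) (i \<in> fst p) (i \<in> snd p) (i \<in> fst q) (i \<in> snd q)"
  note intT = integral_prod_quartic_entry_sum(1)[OF fS]
    and integralT = integral_prod_quartic_entry_sum(2)[OF fS]
  have eq: "(\<lambda>U. complex_of_real (?f U)) = (\<lambda>U. \<Sum>p\<in>Pow S \<times> Pow S. \<Sum>q\<in>Pow S \<times> Pow S.
       ?T p q U * (?r (fst p) (snd p) * ?r (fst q) (snd q)))"
    by (rule ext) (simp only: sum_outcome_prob_square_expand[OF S])
  have intC: "integrable ?M (\<lambda>U. complex_of_real (?f U))"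
    unfolding eq by (intro Bochner_Integration.integrable_sum integrable_mult_left intT)
  then show "integrable ?M ?f"
    using integrable_Re[OF intC] by simp
  have "complex_of_real (integral\<^sup>L ?M ?f) = integral\<^sup>L ?M (\<lambda>U. complex_of_real (?f U))"
    by (rule integral_complex_of_real[symmetric])
  also have "\<dots> = (\<Sum>p\<in>Pow S \<times> Pow S. \<Sum>q\<in>Pow S \<times> Pow S.
       (\<Prod>i\<in>S. u2_moment (i \<in> fst p) (i \<in> snd p) (i \<in> fst q) (i \<in> snd q)) *
       (?r (fst p) (snd p) * ?r (fst q) (snd q)))"
    unfolding eq
    by (simp add: Bochner_Integration.integral_sum Bochner_Integration.integrable_sum
        integrable_mult_left intT integralT)
  also have "\<dots> = (1/3) ^ card S * (\<Sum>\<alpha>\<in>Pow S. \<Sum>a\<in>Pow \<alpha>. \<Sum>b\<in>Pow \<alpha>.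
       reduced_state n psi \<alpha> a b * reduced_state n psi \<alpha> b a)"
    by (rule sum_u2_moment_reduced_state[OF S])
  also have "\<dots> = complex_of_real (mean_collision_prob n psi S)"
    by (simp add: mean_collision_prob_def trace_square_reduced_state purity_eq_sum_norm_square[OF pure])
  finally show "integral\<^sup>L ?M ?f = mean_collision_prob n psi S"
    by (metis of_real_eq_iff)
qed

lemma nn_integral_agree_prob:
  fixes l :: nat
  assumes S: "S \<subseteq> qubits n" and pure: "is_pure_state n psi"
  shows "(\<integral>\<^sup>+U. ennreal (agree_prob n S psi (\<lambda>i. U (l, i)) t) \<partial>Pi\<^sub>M ({l} \<times> S) (\<lambda>_. H)) =
    ennreal (if t then mean_collision_prob n psi S else 1 - mean_collision_prob n psi S)"
proof -
  let ?M = "Pi\<^sub>M ({l} \<times> S) (\<lambda>_. H)" and ?p = "mean_collision_prob n psi S"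
  interpret M: prob_space ?M by (intro prob_space_PiM prob_space_haar[OF haar])
  have fS: "finite S" using S by (rule finite_subset) simp
  let ?f = "\<lambda>U. agree_prob n S psi (\<lambda>i. U (l, i)) True"
  have f: "?f = (\<lambda>U. \<Sum>z\<in>Pow S. (outcome_prob n S (\<lambda>i. U (l, i)) psi z)\<^sup>2)"
    by (simp add: agree_prob_True[OF fS])
  have int: "integrable ?M ?f" and integral: "integral\<^sup>L ?M ?f = ?p"
    unfolding f by (rule integral_collision_prob[OF S pure])+
  show ?thesis
  proof (cases t)
    case True
    then show ?thesis
      using nn_integral_eq_integral[OF int] integral by (simp add: agree_prob_nonneg)
  next
    case False
    have "AE U in ?M. agree_prob n S psi (\<lambda>i. U (l, i)) False = 1 - ?f U"
      using AE_PiM_haar_U2[OF fS order_refl, of l]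
      by (rule eventually_mono) (simp add: agree_prob_False[OF fS] sum_outcome_prob[OF S pure])
    moreover from this have "AE U in ?M. 0 \<le> 1 - ?f U"
      by (rule eventually_mono) (metis agree_prob_nonneg)
    ultimately have "(\<integral>\<^sup>+U. ennreal (agree_prob n S psi (\<lambda>i. U (l, i)) False) \<partial>?M) =
        ennreal (integral\<^sup>L ?M (\<lambda>U. 1 - ?f U))"
      using int by (subst nn_integral_eq_integral[symmetric]) (auto intro: nn_integral_cong_AE)
    also have "integral\<^sup>L ?M (\<lambda>U. 1 - ?f U) = 1 - ?p"
      using int integral by (simp add: Bochner_Integration.integral_diff M.prob_space)
    finally show ?thesis using False by simp
  qed
qed

end

section \<open>Median of means for Bernoulli trials\<close>

lemma sum_PiE_insert:
  assumes "a \<notin> J"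
  shows "(\<Sum>x\<in>(\<Pi>\<^sub>E l\<in>insert a J. T l). f x) = (\<Sum>t\<in>T a. \<Sum>y\<in>(\<Pi>\<^sub>E l\<in>J. T l). f (y(a := t)))"
proof -
  have "(\<Sum>x\<in>(\<Pi>\<^sub>E l\<in>insert a J. T l). f x) =
      (\<Sum>p\<in>T a \<times> (\<Pi>\<^sub>E l\<in>J. T l). f ((\<lambda>(y, g). g(a := y)) p))"
    unfolding PiE_insert_eq by (rule sum.reindex[OF inj_combinator[OF assms], unfolded comp_def])
  then show ?thesis by (simp add: sum.cartesian_product case_prod_beta)
qed

lemma sum_PiE_Un_disjoint:
  assumes "A \<inter> C = {}"
  shows "(\<Sum>x\<in>(\<Pi>\<^sub>E l\<in>A \<union> C. T l). f x) =
    (\<Sum>a\<in>(\<Pi>\<^sub>E l\<in>A. T l). \<Sum>c\<in>(\<Pi>\<^sub>E l\<in>C. T l). f (\<lambda>l. if l \<in> A then a l else c l))"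
proof -
  have "(\<Sum>x\<in>(\<Pi>\<^sub>E l\<in>A \<union> C. T l). f x) =
     (\<Sum>p\<in>(\<Pi>\<^sub>E l\<in>A. T l) \<times> (\<Pi>\<^sub>E l\<in>C. T l). f (\<lambda>l. if l \<in> A then fst p l else snd p l))"
    by (rule sum.reindex_bij_witness[of _ "\<lambda>p l. if l \<in> A then fst p l else snd p l"
          "\<lambda>x. (restrict x A, restrict x C)"])
       (use assms in \<open>auto simp: PiE_iff extensional_def fun_eq_iff intro!: arg_cong[where f=f]\<close>)
  then show ?thesis by (simp add: sum.cartesian_product case_prod_beta)
qed

definition bernoulli_weight :: "real \<Rightarrow> 'a set \<Rightarrow> ('a \<Rightarrow> bool) \<Rightarrow> real" where
  "bernoulli_weight p J x = (\<Prod>l\<in>J. if x l then p else 1 - p)"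

definition count_true :: "'a set \<Rightarrow> ('a \<Rightarrow> bool) \<Rightarrow> real" where
  "count_true J x = (\<Sum>l\<in>J. if x l then 1 else 0)"

lemma bernoulli_weight_nonneg: "0 \<le> p \<Longrightarrow> p \<le> 1 \<Longrightarrow> 0 \<le> bernoulli_weight p J x"
  unfolding bernoulli_weight_def by (intro prod_nonneg) auto

lemma bernoulli_weight_insert:
  assumes "a \<notin> J" "finite J"
  shows "bernoulli_weight p (insert a J) (x(a := t)) = (if t then p else 1 - p) * bernoulli_weight p J x"
proof -
  have "(\<Prod>l\<in>J. if (x(a := t)) l then p else 1 - p) = (\<Prod>l\<in>J. if x l then p else 1 - p)"
    using assms by (intro prod.cong) auto
  then show ?thesis using assms by (simp add: bernoulli_weight_def)
qed

lemma count_true_insert: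
  assumes "a \<notin> J" "finite J"
  shows "count_true (insert a J) (x(a := t)) = (if t then 1 else 0) + count_true J x"
proof -
  have "(\<Sum>l\<in>J. if (x(a := t)) l then 1 else (0::real)) = (\<Sum>l\<in>J. if x l then 1 else 0)"
    using assms by (intro sum.cong) auto
  then show ?thesis using assms by (simp add: count_true_def)
qed

lemma bernoulli_moments:
  fixes p :: real
  assumes "finite J"
  shows "(\<Sum>x\<in>J \<rightarrow>\<^sub>E UNIV. bernoulli_weight p J x) = 1"
    and "(\<Sum>x\<in>J \<rightarrow>\<^sub>E UNIV. bernoulli_weight p J x * count_true J x) = card J * p"
    and "(\<Sum>x\<in>J \<rightarrow>\<^sub>E UNIV. bernoulli_weight p J x * (count_true J x)\<^sup>2) =
      card J * p + card J * (real (card J) - 1) * p\<^sup>2"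
  using assms
proof (induction J rule: finite_induct)
  case empty
  { case 1 show ?case by (simp add: bernoulli_weight_def) }
  { case 2 show ?case by (simp add: bernoulli_weight_def count_true_def) }
  { case 3 show ?case by (simp add: bernoulli_weight_def count_true_def) }
next
  case (insert a J)
  let ?X = "J \<rightarrow>\<^sub>E (UNIV :: bool set)" and ?w = "bernoulli_weight p J" and ?k = "count_true J"
  have step: "(\<Sum>x\<in>insert a J \<rightarrow>\<^sub>E UNIV. bernoulli_weight p (insert a J) x * g (count_true (insert a J) x)) =
      (1 - p) * (\<Sum>x\<in>?X. ?w x * g (?k x)) + p * (\<Sum>x\<in>?X. ?w x * g (1 + ?k x))" for g
    using insert.hyps
    by (simp add: sum_PiE_insert UNIV_bool bernoulli_weight_insert count_true_insert sum.distrib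
        sum_distrib_left mult.assoc)
  have sq: "?w x * (1 + ?k x)\<^sup>2 = ?w x + 2 * (?w x * ?k x) + ?w x * (?k x)\<^sup>2" for x
    by (simp add: power2_eq_square algebra_simps)
  have m1: "(\<Sum>x\<in>?X. ?w x * (1 + ?k x)) = 1 + card J * p"
    by (simp add: distrib_left sum.distrib insert.IH)
  have m2: "(\<Sum>x\<in>?X. ?w x * (1 + ?k x)\<^sup>2) = 1 + 2 * (card J * p) + (card J * p + card J * (real (card J) - 1) * p\<^sup>2)"
    by (simp only: sq sum.distrib sum_distrib_left[symmetric] insert.IH)
  { case 1 show ?case using step[of "\<lambda>_. 1"] by (simp only: mult_1_right insert.IH) }
  { case 2
    have "(\<Sum>x\<in>insert a J \<rightarrow>\<^sub>E UNIV. bernoulli_weight p (insert a J) x * count_true (insert a J) x) =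
        (1 - p) * (card J * p) + p * (1 + card J * p)"
      using step[of "\<lambda>k. k"] by (simp only: insert.IH m1)
    then show ?case using insert.hyps by (simp add: algebra_simps) }
  { case 3
    have "(\<Sum>x\<in>insert a J \<rightarrow>\<^sub>E UNIV. bernoulli_weight p (insert a J) x * (count_true (insert a J) x)\<^sup>2) =
        (1 - p) * (card J * p + card J * (real (card J) - 1) * p\<^sup>2) +
        p * (1 + 2 * (card J * p) + (card J * p + card J * (real (card J) - 1) * p\<^sup>2))"
      using step[of "\<lambda>k. k\<^sup>2"] by (simp only: insert.IH m2)
    then show ?case using insert.hyps by (simp add: algebra_simps power2_eq_square) }
qed

lemma bernoulli_variance:
  fixes p :: real
  assumes "finite J"
  shows "(\<Sum>x\<in>J \<rightarrow>\<^sub>E UNIV. bernoulli_weight p J x * (count_true J x - card J * p)\<^sup>2) = card J * p * (1 - p)"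
proof -
  have "(\<Sum>x\<in>J \<rightarrow>\<^sub>E UNIV. bernoulli_weight p J x * (count_true J x - card J * p)\<^sup>2) =
      (\<Sum>x\<in>J \<rightarrow>\<^sub>E UNIV. bernoulli_weight p J x * (count_true J x)\<^sup>2)
      - 2 * (card J * p) * (\<Sum>x\<in>J \<rightarrow>\<^sub>E UNIV. bernoulli_weight p J x * count_true J x)
      + (card J * p)\<^sup>2 * (\<Sum>x\<in>J \<rightarrow>\<^sub>E UNIV. bernoulli_weight p J x)"
    by (simp add: power2_eq_square algebra_simps sum.distrib sum_subtractf sum_distrib_left)
  also have "\<dots> = (card J * p + card J * (real (card J) - 1) * p\<^sup>2) - 2 * (card J * p) * (card J * p)
      + (card J * p)\<^sup>2 * 1"
    by (simp only: bernoulli_moments[OF assms])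
  also have "\<dots> = card J * p * (1 - p)"
    by (simp add: power2_eq_square algebra_simps)
  finally show ?thesis .
qed

definition block :: "nat \<Rightarrow> nat \<Rightarrow> nat set" where
  "block B b = {(b - 1) * B + 1..b * B}"

definition block_mean_estimate :: "real \<Rightarrow> nat \<Rightarrow> (nat \<Rightarrow> bool) \<Rightarrow> nat \<Rightarrow> real" where
  "block_mean_estimate a B x b = 1 - a * (1 / real B) * count_true (block B b) x"

definition median_of_means :: "real \<Rightarrow> nat \<Rightarrow> nat \<Rightarrow> (nat \<Rightarrow> bool) \<Rightarrow> real" where
  "median_of_means a B NB x = median (map (block_mean_estimate a B x) [1..<NB + 1])"

lemma finite_block [simp]: "finite (block B b)"
  by (simp add: block_def)

lemma block_subset: "b \<in> {1..N} \<Longrightarrow> block B b \<subseteq> {1..N * B}"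
  unfolding block_def using mult_le_mono1[of b N B] by auto

lemma card_block: "1 \<le> b \<Longrightarrow> card (block B b) = B"
proof -
  assume "1 \<le> b"
  then have "b * B = (b - 1) * B + B" by (metis add.commute le_add_diff_inverse mult.commute mult_Suc_right plus_1_eq_Suc)
  then show ?thesis unfolding block_def by simp
qed

lemma median_of_means_cong:
  assumes "\<And>l. l \<in> {1..NB * B} \<Longrightarrow> x l = y l"
  shows "median_of_means a B NB x = median_of_means a B NB y"
proof -
  have "count_true (block B b) x = count_true (block B b) y" if "b \<in> {1..NB}" for b
  proof -
    have "x l = y l" if "l \<in> block B b" for l
      using block_subset[OF \<open>b \<in> {1..NB}\<close>, of B] that assms by blast
    then show ?thesis unfolding count_true_def by (intro sum.cong) auto
  qed
  then show ?thesis
    unfolding median_of_means_def block_mean_estimate_def by (intro arg_cong[where f=median] map_cong) auto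
qed

lemma sum_bernoulli_weight_prod_blocks:
  fixes h :: "nat \<Rightarrow> (nat \<Rightarrow> bool) \<Rightarrow> real"
  assumes h: "\<And>b x y. (\<And>l. l \<in> block B b \<Longrightarrow> x l = y l) \<Longrightarrow> h b x = h b y"
  shows "(\<Sum>x\<in>{1..N * B} \<rightarrow>\<^sub>E UNIV. bernoulli_weight p {1..N * B} x * (\<Prod>b\<in>{1..N}. h b x)) =
    (\<Prod>b\<in>{1..N}. \<Sum>y\<in>block B b \<rightarrow>\<^sub>E UNIV. bernoulli_weight p (block B b) y * h b y)"
proof (induction N)
  case 0
  then show ?case by (simp add: bernoulli_weight_def)
next
  case (Suc N)
  let ?A = "{1..N * B}" and ?C = "block B (Suc N)"
  let ?m = "\<lambda>a c l. if l \<in> ?A then a l else c l"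
  have AC: "?A \<inter> ?C = {}" unfolding block_def by auto
  have U: "{1..Suc N * B} = ?A \<union> ?C" unfolding block_def by auto
  have weight: "bernoulli_weight p (?A \<union> ?C) (?m a c) = bernoulli_weight p ?A a * bernoulli_weight p ?C c"
    for a c
  proof -
    have "bernoulli_weight p (?A \<union> ?C) (?m a c) = bernoulli_weight p ?A (?m a c) * bernoulli_weight p ?C (?m a c)"
      unfolding bernoulli_weight_def by (rule prod.union_disjoint) (auto simp: block_def)
    also have "bernoulli_weight p ?A (?m a c) = bernoulli_weight p ?A a"
      unfolding bernoulli_weight_def by (intro prod.cong) auto
    also have "bernoulli_weight p ?C (?m a c) = bernoulli_weight p ?C c"
      unfolding bernoulli_weight_def using AC by (intro prod.cong) auto
    finally show ?thesis .
  qed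
  have factors: "(\<Prod>b\<in>{1..Suc N}. h b (?m a c)) = (\<Prod>b\<in>{1..N}. h b a) * h (Suc N) c" for a c
  proof -
    have "h b (?m a c) = h b a" if "b \<in> {1..N}" for b
      using block_subset[OF that, of B] by (intro h) auto
    moreover have "h (Suc N) (?m a c) = h (Suc N) c" using AC by (intro h) auto
    ultimately show ?thesis by (simp add: atLeastAtMostSuc_conv)
  qed
  have "(\<Sum>x\<in>{1..Suc N * B} \<rightarrow>\<^sub>E UNIV. bernoulli_weight p {1..Suc N * B} x * (\<Prod>b\<in>{1..Suc N}. h b x)) =
      (\<Sum>a\<in>?A \<rightarrow>\<^sub>E UNIV. \<Sum>c\<in>?C \<rightarrow>\<^sub>E UNIV.
        (bernoulli_weight p ?A a * (\<Prod>b\<in>{1..N}. h b a)) * (bernoulli_weight p ?C c * h (Suc N) c))"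
    unfolding U sum_PiE_Un_disjoint[OF AC] weight factors by (simp add: mult_ac)
  also have "\<dots> = (\<Sum>a\<in>?A \<rightarrow>\<^sub>E UNIV. bernoulli_weight p ?A a * (\<Prod>b\<in>{1..N}. h b a)) *
      (\<Sum>c\<in>?C \<rightarrow>\<^sub>E UNIV. bernoulli_weight p ?C c * h (Suc N) c)"
    by (simp add: sum_product)
  also have "\<dots> = (\<Prod>b\<in>{1..Suc N}. \<Sum>y\<in>block B b \<rightarrow>\<^sub>E UNIV. bernoulli_weight p (block B b) y * h b y)"
    unfolding Suc.IH by (simp add: atLeastAtMostSuc_conv)
  finally show ?case .
qed

lemma median_le_upper_middle:
  assumes "xs \<noteq> []"
  shows "median xs \<le> sort xs ! (length xs div 2)"
proof -
  have "sort xs ! (length xs div 2 - 1) \<le> sort xs ! (length xs div 2)"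
    using assms by (intro sorted_nth_mono) auto
  then show ?thesis by (simp add: median_def Let_def)
qed

lemma lower_middle_le_median:
  assumes "xs \<noteq> []"
  shows "sort xs ! ((length xs - 1) div 2) \<le> median xs"
proof (cases "odd (length xs)")
  case True
  then have "(length xs - 1) div 2 = length xs div 2" by presburger
  then show ?thesis using True by (simp add: median_def Let_def)
next
  case False
  then have "(length xs - 1) div 2 = length xs div 2 - 1" using assms by presburger
  moreover have "sort xs ! (length xs div 2 - 1) \<le> sort xs ! (length xs div 2)"
    using assms by (intro sorted_nth_mono) auto
  ultimately show ?thesis using False by (simp add: median_def Let_def)
qed

lemma median_far_imp_half_far:
  fixes xs :: "real list"
  assumes ne: "xs \<noteq> []" and far: "e \<le> \<bar>median xs - c\<bar>"
  shows "length xs \<le> 2 * length (filter (\<lambda>y. e \<le> \<bar>y - c\<bar>) xs)"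
proof -
  define ys where "ys = sort xs"
  define m where "m = length xs"
  let ?P = "\<lambda>y. e \<le> \<bar>y - c\<bar>"
  have ly: "length ys = m" and m0: "0 < m" using ne unfolding ys_def m_def by simp_all
  have "length (filter ?P xs) = length (filter ?P ys)" unfolding ys_def filter_sort by simp
  then have count: "length (filter ?P xs) = card {i. i < m \<and> ?P (ys ! i)}"
    unfolding length_filter_conv_card ly .
  have mono: "ys ! i \<le> ys ! j" if "i \<le> j" "j < m" for i j
    using sorted_nth_mono[of ys i j] that ly unfolding ys_def by simp
  from far consider "e \<le> median xs - c" | "e \<le> c - median xs" by linarith
  then show ?thesis
  proof cases
    case 1
    have "{m div 2..<m} \<subseteq> {i. i < m \<and> ?P (ys ! i)}"
      using 1 median_le_upper_middle[OF ne] mono unfolding ys_def m_def by force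
    then have "card {m div 2..<m} \<le> card {i. i < m \<and> ?P (ys ! i)}" by (intro card_mono) auto
    then show ?thesis unfolding count m_def[symmetric] by simp
  next
    case 2
    have "{0..(m - 1) div 2} \<subseteq> {i. i < m \<and> ?P (ys ! i)}"
    proof
      fix i assume i: "i \<in> {0..(m - 1) div 2}"
      then have "i < m" "ys ! i \<le> ys ! ((m - 1) div 2)" using m0 mono by auto
      then show "i \<in> {i. i < m \<and> ?P (ys ! i)}"
        using 2 lower_middle_le_median[OF ne] unfolding ys_def m_def by auto
    qed
    then have "card {0..(m - 1) div 2} \<le> card {i. i < m \<and> ?P (ys ! i)}" by (intro card_mono) auto
    then show ?thesis unfolding count m_def[symmetric] by simp
  qed
qed

lemma prod_two_values_ge_1:
  fixes a :: real
  assumes "finite A" "1 \<le> a" and "card A \<le> 2 * card {b\<in>A. Q b}"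
  shows "1 \<le> (\<Prod>b\<in>A. if Q b then a else 1 / a)"
proof -
  let ?c = "card {b\<in>A. Q b}"
  have "A \<inter> {b. Q b} = {b\<in>A. Q b}" by auto
  moreover have "card (A \<inter> - {b. Q b}) = card A - ?c"
    using card_Int_Diff[OF assms(1), of "{b. Q b}"] by (simp add: Diff_eq Int_def)
  ultimately have "(\<Prod>b\<in>A. if Q b then a else 1 / a) = a ^ ?c / a ^ (card A - ?c)"
    using assms(1) by (simp add: prod.If_cases power_one_over)
  moreover have "a ^ (card A - ?c) \<le> a ^ ?c" using assms(2,3) by (intro power_increasing) auto
  ultimately show ?thesis using assms(2) by simp
qed

lemma median_of_means_far_le_prod:
  assumes "1 \<le> NB"
  shows "(if eps \<le> \<bar>median_of_means a B NB x - C\<bar> then 1 else 0) \<le>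
    (\<Prod>b\<in>{1..NB}. if eps \<le> \<bar>block_mean_estimate a B x b - C\<bar> then sqrt 3 else 1 / sqrt 3)"
proof (cases "eps \<le> \<bar>median_of_means a B NB x - C\<bar>")
  case True
  let ?xs = "map (block_mean_estimate a B x) [1..<NB + 1]"
  have "length ?xs \<le> 2 * length (filter (\<lambda>y. eps \<le> \<bar>y - C\<bar>) ?xs)"
    using assms True unfolding median_of_means_def by (intro median_far_imp_half_far) auto
  also have "length (filter (\<lambda>y. eps \<le> \<bar>y - C\<bar>) ?xs) =
      card {b\<in>{1..NB}. eps \<le> \<bar>block_mean_estimate a B x b - C\<bar>}"
    by (simp add: filter_map distinct_length_filter atLeastLessThanSuc_atLeastAtMost Int_def conj_commute)
       (intro arg_cong[where f=card], auto)
  finally have "card {1..NB} \<le> 2 * card {b\<in>{1..NB}. eps \<le> \<bar>block_mean_estimate a B x b - C\<bar>}"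
    by (simp del: upt_Suc)
  then show ?thesis using True by (simp add: prod_two_values_ge_1)
qed (simp add: prod_nonneg)

lemma block_far_prob_le:
  fixes p a eps :: real
  assumes p: "0 \<le> p" "p \<le> 1" and a: "0 < a" "a * p \<le> 1" and eps: "0 < eps" and b: "1 \<le> b"
    and B: "4 * a / eps\<^sup>2 \<le> real B"
  shows "(\<Sum>y\<in>block B b \<rightarrow>\<^sub>E UNIV. bernoulli_weight p (block B b) y *
           (if eps \<le> \<bar>block_mean_estimate a B y b - (1 - a * p)\<bar> then 1 else 0)) \<le> 1 / 4"
proof -
  let ?J = "block B b" and ?X = "block B b \<rightarrow>\<^sub>E (UNIV :: bool set)"
  let ?far = "\<lambda>y. eps \<le> \<bar>block_mean_estimate a B y b - (1 - a * p)\<bar>"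
  have B0: "0 < real B" using B a eps by (smt (verit) divide_pos_pos zero_less_power)
  have deviation: "block_mean_estimate a B y b - (1 - a * p) = (a / real B) * (real B * p - count_true ?J y)" for y
    using B0 by (simp add: block_mean_estimate_def field_simps)
  have chebyshev: "(if ?far y then 1 else 0) \<le> (a / real B)\<^sup>2 / eps\<^sup>2 * (count_true ?J y - real B * p)\<^sup>2" for y
  proof (cases "?far y")
    case True
    then have "eps\<^sup>2 \<le> \<bar>block_mean_estimate a B y b - (1 - a * p)\<bar>\<^sup>2" using eps by (intro power_mono) auto
    also have "\<dots> = (a / real B)\<^sup>2 * (count_true ?J y - real B * p)\<^sup>2"
      unfolding power2_abs deviation by (simp only: power_mult_distrib power2_commute[of "real B * p"])
    finally show ?thesis using True eps by (simp add: le_divide_eq)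
  qed simp
  have "(\<Sum>y\<in>?X. bernoulli_weight p ?J y * (if ?far y then 1 else 0)) \<le>
      (\<Sum>y\<in>?X. bernoulli_weight p ?J y * ((a / real B)\<^sup>2 / eps\<^sup>2 * (count_true ?J y - real B * p)\<^sup>2))"
    by (intro sum_mono mult_left_mono chebyshev bernoulli_weight_nonneg p)
  also have "\<dots> = (a / real B)\<^sup>2 / eps\<^sup>2 *
      (\<Sum>y\<in>?X. bernoulli_weight p ?J y * (count_true ?J y - card ?J * p)\<^sup>2)"
    by (simp add: sum_distrib_left card_block[OF b] mult_ac)
  also have "\<dots> = (a / real B)\<^sup>2 / eps\<^sup>2 * (real B * p * (1 - p))"
    using bernoulli_variance[of ?J p] card_block[OF b] by simp
  also have "\<dots> = (a * p) * a * (1 - p) / (real B * eps\<^sup>2)"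
    using B0 eps by (simp add: power2_eq_square field_simps)
  also have "\<dots> \<le> a / (real B * eps\<^sup>2)"
    using p a B0 eps by (intro divide_right_mono) (auto intro!: mult_le_one mult_left_le simp: mult.commute)
  also have "\<dots> \<le> 1 / 4"
    using B B0 eps by (simp add: field_simps)
  finally show ?thesis .
qed

lemma block_factor_expectation_le:
  fixes p a eps :: real
  assumes p: "0 \<le> p" "p \<le> 1" and a: "0 < a" "a * p \<le> 1" and eps: "0 < eps" and b: "1 \<le> b"
    and B: "4 * a / eps\<^sup>2 \<le> real B"
  shows "(\<Sum>y\<in>block B b \<rightarrow>\<^sub>E UNIV. bernoulli_weight p (block B b) y *
           (if eps \<le> \<bar>block_mean_estimate a B y b - (1 - a * p)\<bar> then sqrt 3 else 1 / sqrt 3)) \<le> sqrt 3 / 2"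
proof -
  let ?J = "block B b" and ?X = "block B b \<rightarrow>\<^sub>E (UNIV :: bool set)"
  let ?far = "\<lambda>y. eps \<le> \<bar>block_mean_estimate a B y b - (1 - a * p)\<bar>"
  have sqrt3: "3 / sqrt 3 = sqrt (3::real)" by (rule real_div_sqrt) simp
  then have "(if ?far y then sqrt 3 else 1 / sqrt 3) = 1 / sqrt 3 + (2 / sqrt 3) * (if ?far y then 1 else 0)"
    for y by (simp add: field_simps)
  then have "(\<Sum>y\<in>?X. bernoulli_weight p ?J y * (if ?far y then sqrt 3 else 1 / sqrt 3)) =
      (1 / sqrt 3) * (\<Sum>y\<in>?X. bernoulli_weight p ?J y) +
      (2 / sqrt 3) * (\<Sum>y\<in>?X. bernoulli_weight p ?J y * (if ?far y then 1 else 0))"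
    by (simp add: sum_distrib_left sum.distrib distrib_left mult_ac)
  also have "\<dots> \<le> (1 / sqrt 3) * 1 + (2 / sqrt 3) * (1 / 4)"
    unfolding bernoulli_moments(1)[OF finite_block]
    by (intro add_left_mono mult_left_mono block_far_prob_le assms) simp
  also have "\<dots> = sqrt 3 / 2" using sqrt3 by (simp add: field_simps)
  finally show ?thesis .
qed

lemma median_of_means_tail:
  fixes p a eps :: real
  assumes p: "0 \<le> p" "p \<le> 1" and a: "0 < a" "a * p \<le> 1" and eps: "0 < eps" and NB: "1 \<le> NB"
    and B: "4 * a / eps\<^sup>2 \<le> real B"
  shows "(\<Sum>x\<in>{1..NB * B} \<rightarrow>\<^sub>E UNIV. if eps \<le> \<bar>median_of_means a B NB x - (1 - a * p)\<bar>
           then bernoulli_weight p {1..NB * B} x else 0) \<le> (sqrt 3 / 2) ^ NB"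
proof -
  let ?h = "\<lambda>b x. if eps \<le> \<bar>block_mean_estimate a B x b - (1 - a * p)\<bar> then sqrt 3 else 1 / sqrt 3"
  have "(\<Sum>x\<in>{1..NB * B} \<rightarrow>\<^sub>E UNIV. if eps \<le> \<bar>median_of_means a B NB x - (1 - a * p)\<bar>
           then bernoulli_weight p {1..NB * B} x else 0) \<le>
      (\<Sum>x\<in>{1..NB * B} \<rightarrow>\<^sub>E UNIV. bernoulli_weight p {1..NB * B} x * (\<Prod>b\<in>{1..NB}. ?h b x))"
  proof (intro sum_mono)
    fix x
    have "bernoulli_weight p {1..NB * B} x * (if eps \<le> \<bar>median_of_means a B NB x - (1 - a * p)\<bar> then 1 else 0)
        \<le> bernoulli_weight p {1..NB * B} x * (\<Prod>b\<in>{1..NB}. ?h b x)"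
      by (rule mult_left_mono[OF median_of_means_far_le_prod[OF NB] bernoulli_weight_nonneg[OF p]])
    then show "(if eps \<le> \<bar>median_of_means a B NB x - (1 - a * p)\<bar> then bernoulli_weight p {1..NB * B} x else 0)
        \<le> bernoulli_weight p {1..NB * B} x * (\<Prod>b\<in>{1..NB}. ?h b x)"
      by (simp split: if_splits)
  qed
  also have "\<dots> = (\<Prod>b\<in>{1..NB}. \<Sum>y\<in>block B b \<rightarrow>\<^sub>E UNIV. bernoulli_weight p (block B b) y * ?h b y)"
  proof (rule sum_bernoulli_weight_prod_blocks)
    fix b x y assume "\<And>l. l \<in> block B b \<Longrightarrow> x l = (y l :: bool)"
    then have "count_true (block B b) x = count_true (block B b) y"
      unfolding count_true_def by (intro sum.cong) auto
    then show "?h b x = ?h b y" by (simp add: block_mean_estimate_def)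
  qed
  also have "\<dots> \<le> (\<Prod>b\<in>{1..NB}. sqrt 3 / 2)"
    by (intro prod_mono conjI sum_nonneg mult_nonneg_nonneg bernoulli_weight_nonneg p
        block_factor_expectation_le a eps B) auto
  finally show ?thesis by simp
qed

lemma sqrt3_half_pow_le:
  fixes delta :: real
  assumes "0 < delta"
  shows "(sqrt 3 / 2) ^ nat \<lceil>8 * ln (1 / delta)\<rceil> \<le> delta"
proof -
  let ?N = "nat \<lceil>8 * ln (1 / delta)\<rceil>"
  have "exp (1/4 :: real) \<le> 1 + 1/4 + (1/4)\<^sup>2" by (rule exp_bound) simp_all
  then have "3/4 \<le> exp (- 1/4 :: real)" by (simp add: exp_minus field_simps power2_eq_square)
  also have "exp (- 1/4 :: real) = (exp (- 1/8))\<^sup>2" by (simp flip: exp_double)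
  finally have "(sqrt 3 / 2)\<^sup>2 \<le> (exp (- 1/8 :: real))\<^sup>2" by (simp add: power_divide)
  then have "sqrt 3 / 2 \<le> exp (- 1/8 :: real)" by (rule power2_le_imp_le) simp
  then have "(sqrt 3 / 2) ^ ?N \<le> exp (- 1/8 :: real) ^ ?N" by (rule power_mono) simp
  also have "\<dots> = exp (- real ?N / 8)" by (simp flip: exp_of_nat_mult)
  also have "\<dots> \<le> exp (- ln (1 / delta))" using real_nat_ceiling_ge[of "8 * ln (1 / delta)"] by simp
  also have "\<dots> = delta" using assms by (simp add: ln_div)
  finally show ?thesis .
qed

section \<open>The failure probability\<close>

lemma block_estimate_eq:
  "block_estimate s B Z = block_mean_estimate ((3/2) ^ s) B (\<lambda>l. Z l 1 = Z l 2)"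
  by (simp add: fun_eq_iff block_estimate_def block_mean_estimate_def count_true_def block_def)

lemma sum_PiE_pair:
  "(\<Sum>t\<in>(\<Pi>\<^sub>E j\<in>{1::nat, 2}. A). f (t 1) (t 2)) = (\<Sum>z\<in>A. \<Sum>z'\<in>A. f z z')"
proof -
  have "(\<Sum>t\<in>(\<Pi>\<^sub>E j\<in>{1::nat, 2}. A). f (t 1) (t 2)) = (\<Sum>p\<in>A \<times> A. f (fst p) (snd p))"
    by (rule sum.reindex_bij_witness[of _ "\<lambda>p j. if j = 1 then fst p else if j = 2 then snd p else undefined"
          "\<lambda>t. (t 1, t 2)"])
       (auto simp: PiE_iff extensional_def fun_eq_iff)
  then show ?thesis by (simp add: sum.cartesian_product case_prod_beta)
qed

lemma sum_PiE_pairs_by_agreement: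
  fixes P :: "'l \<Rightarrow> 'a \<Rightarrow> real" and G :: "('l \<Rightarrow> bool) \<Rightarrow> real"
  assumes I: "finite I" and A: "finite A" and G: "\<And>x y. (\<And>l. l \<in> I \<Longrightarrow> x l = y l) \<Longrightarrow> G x = G y"
  shows "(\<Sum>Z\<in>(\<Pi>\<^sub>E l\<in>I. \<Pi>\<^sub>E j\<in>{1::nat, 2}. A). (\<Prod>l\<in>I. P l (Z l 1) * P l (Z l 2)) * G (\<lambda>l. Z l 1 = Z l 2)) =
    (\<Sum>x\<in>I \<rightarrow>\<^sub>E UNIV. G x * (\<Prod>l\<in>I. \<Sum>z\<in>A. \<Sum>z'\<in>A. if x l = (z = z') then P l z * P l z' else 0))"
proof -
  let ?X = "I \<rightarrow>\<^sub>E (UNIV :: bool set)" and ?T = "\<Pi>\<^sub>E j\<in>{1::nat, 2}. A"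
  have select: "G f = (\<Sum>x\<in>?X. if \<forall>l\<in>I. x l = f l then G x else 0)" for f
  proof -
    have "(\<Sum>x\<in>?X. if \<forall>l\<in>I. x l = f l then G x else 0) = (\<Sum>x\<in>?X. if x = restrict f I then G x else 0)"
      by (intro sum.cong refl) (auto simp: fun_eq_iff PiE_iff extensional_def)
    also have "\<dots> = G (restrict f I)" using I by (simp add: finite_PiE)
    also have "\<dots> = G f" by (rule G) simp
    finally show ?thesis by simp
  qed
  have "(\<Sum>Z\<in>(\<Pi>\<^sub>E l\<in>I. ?T). (\<Prod>l\<in>I. P l (Z l 1) * P l (Z l 2)) * G (\<lambda>l. Z l 1 = Z l 2)) =
      (\<Sum>Z\<in>(\<Pi>\<^sub>E l\<in>I. ?T). \<Sum>x\<in>?X. G x *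
        (\<Prod>l\<in>I. if x l = (Z l 1 = Z l 2) then P l (Z l 1) * P l (Z l 2) else 0))"
  proof (intro sum.cong refl)
    fix Z :: "'l \<Rightarrow> nat \<Rightarrow> 'a"
    show "(\<Prod>l\<in>I. P l (Z l 1) * P l (Z l 2)) * G (\<lambda>l. Z l 1 = Z l 2) =
        (\<Sum>x\<in>?X. G x * (\<Prod>l\<in>I. if x l = (Z l 1 = Z l 2) then P l (Z l 1) * P l (Z l 2) else 0))"
      unfolding select[of "\<lambda>l. Z l 1 = Z l 2"] sum_distrib_left
      by (intro sum.cong refl) (auto simp: prod_zero I)
  qed
  also have "\<dots> = (\<Sum>x\<in>?X. G x * (\<Sum>Z\<in>(\<Pi>\<^sub>E l\<in>I. ?T).
      \<Prod>l\<in>I. if x l = (Z l 1 = Z l 2) then P l (Z l 1) * P l (Z l 2) else 0))"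
    by (subst sum.swap) (simp add: sum_distrib_left)
  also have "\<dots> = (\<Sum>x\<in>?X. G x * (\<Prod>l\<in>I. \<Sum>t\<in>?T. if x l = (t 1 = t 2) then P l (t 1) * P l (t 2) else 0))"
    by (intro sum.cong refl arg_cong2[where f="(*)"]) (rule prod_sum_PiE[symmetric], simp_all add: I A finite_PiE)
  also have "\<dots> = (\<Sum>x\<in>?X. G x * (\<Prod>l\<in>I. \<Sum>z\<in>A. \<Sum>z'\<in>A. if x l = (z = z') then P l z * P l z' else 0))"
    by (simp only: sum_PiE_pair[where f="\<lambda>z z'. if _ = (z = z') then P _ z * P _ z' else 0"])
  finally show ?thesis .
qed

context
  fixes H :: "mat2 measure"
  assumes haar: "haar_U2 H"
begin

lemma nn_integral_prod_agree_prob: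
  fixes x :: "nat \<Rightarrow> bool"
  assumes S: "S \<subseteq> qubits n" and pure: "is_pure_state n psi" and I: "finite I"
  shows "(\<integral>\<^sup>+U. (\<Prod>l\<in>I. ennreal (agree_prob n S psi (\<lambda>i. U (l, i)) (x l))) \<partial>Pi\<^sub>M (I \<times> S) (\<lambda>_. H)) =
    ennreal (bernoulli_weight (mean_collision_prob n psi S) I x)"
proof -
  let ?p = "mean_collision_prob n psi S"
  have fS: "finite S" using S by (rule finite_subset) simp
  have p: "0 \<le> ?p" "?p \<le> 1"
    using mean_collision_prob_nonneg[OF pure] mean_collision_prob_le_1[OF S pure] .
  have "(\<integral>\<^sup>+U. (\<Prod>l\<in>I. ennreal (agree_prob n S psi (\<lambda>i. U (l, i)) (x l))) \<partial>Pi\<^sub>M (I \<times> S) (\<lambda>_. H)) =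
      (\<Prod>l\<in>I. \<integral>\<^sup>+U. ennreal (agree_prob n S psi (\<lambda>i. U (l, i)) (x l)) \<partial>Pi\<^sub>M ({l} \<times> S) (\<lambda>_. H))"
  proof (rule nn_integral_prod_blocks[OF prob_space_haar[OF haar] I fS])
    fix l :: nat and u u' :: "nat \<Rightarrow> mat2" assume "\<And>i. i \<in> S \<Longrightarrow> u i = u' i"
    then show "ennreal (agree_prob n S psi u (x l)) = ennreal (agree_prob n S psi u' (x l))"
      by (subst agree_prob_cong) simp_all
  next
    fix l :: nat and K assume "{l} \<times> S \<subseteq> K"
    with sets_haar[OF haar] show "(\<lambda>U. ennreal (agree_prob n S psi (\<lambda>i. U (l, i)) (x l))) \<in> borel_measurable (Pi\<^sub>M K (\<lambda>_. H))"
      by (intro measurable_compose[OF borel_measurable_agree_prob measurable_ennreal])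
  qed
  also have "\<dots> = (\<Prod>l\<in>I. ennreal (if x l then ?p else 1 - ?p))"
    by (simp add: nn_integral_agree_prob[OF haar S pure])
  also have "\<dots> = ennreal (bernoulli_weight ?p I x)"
    unfolding bernoulli_weight_def using p by (simp add: prod_ennreal)
  finally show ?thesis .
qed

lemma failure_prob_eq:
  assumes S: "S \<subseteq> qubits n" and pure: "is_pure_state n psi"
  shows "failure_prob H n psi S eps NB B = ennreal (\<Sum>x\<in>{1..NB * B} \<rightarrow>\<^sub>E UNIV.
      if eps \<le> \<bar>median_of_means ((3/2) ^ card S) B NB x - conc_ent n psi S\<bar>
      then bernoulli_weight (mean_collision_prob n psi S) {1..NB * B} x else 0)"
proof -
  let ?I = "{1..NB * B}" and ?X = "{1..NB * B} \<rightarrow>\<^sub>E (UNIV :: bool set)"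
  let ?G = "\<lambda>x. if eps \<le> \<bar>median_of_means ((3/2) ^ card S) B NB x - conc_ent n psi S\<bar> then 1 else 0 :: real"
  let ?M = "Pi\<^sub>M (?I \<times> S) (\<lambda>_. H)"
  let ?a = "\<lambda>U l. agree_prob n S psi (\<lambda>i. U (l, i))"
  have fS: "finite S" using S by (rule finite_subset) simp
  have meas: "(\<lambda>U. ennreal (?a U l t)) \<in> borel_measurable ?M" if "l \<in> ?I" for l t
    using that by (intro measurable_compose[OF borel_measurable_agree_prob[OF sets_haar[OF haar]]]) auto
  have "(\<Sum>Z\<in>(\<Pi>\<^sub>E l\<in>?I. \<Pi>\<^sub>E j\<in>{1::nat, 2}. Pow S).
      (\<Prod>l\<in>?I. outcome_prob n S (\<lambda>i. U (l, i)) psi (Z l 1) * outcome_prob n S (\<lambda>i. U (l, i)) psi (Z l 2)) *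
      (if eps \<le> \<bar>median (map (block_estimate (card S) B Z) [1..<NB + 1]) - conc_ent n psi S\<bar> then 1 else 0)) =
    (\<Sum>x\<in>?X. ?G x * (\<Prod>l\<in>?I. ?a U l (x l)))" for U
    unfolding block_estimate_eq median_of_means_def[symmetric] agree_prob_def
  proof (rule sum_PiE_pairs_by_agreement)
    fix x y :: "nat \<Rightarrow> bool" assume "\<And>l. l \<in> ?I \<Longrightarrow> x l = y l"
    then have "median_of_means ((3/2) ^ card S) B NB x = median_of_means ((3/2) ^ card S) B NB y"
      by (rule median_of_means_cong)
    then show "?G x = ?G y" by simp
  qed (simp_all add: fS)
  then have "failure_prob H n psi S eps NB B = (\<integral>\<^sup>+U. ennreal (\<Sum>x\<in>?X. ?G x * (\<Prod>l\<in>?I. ?a U l (x l))) \<partial>?M)"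
    unfolding failure_prob_def Let_def by simp
  also have "\<dots> = (\<integral>\<^sup>+U. (\<Sum>x\<in>?X. ennreal (?G x) * (\<Prod>l\<in>?I. ennreal (?a U l (x l)))) \<partial>?M)"
    by (intro nn_integral_cong)
       (simp add: sum_ennreal[symmetric] agree_prob_nonneg prod_nonneg ennreal_mult prod_ennreal)
  also have "\<dots> = (\<Sum>x\<in>?X. ennreal (?G x) * (\<integral>\<^sup>+U. (\<Prod>l\<in>?I. ennreal (?a U l (x l))) \<partial>?M))"
    using meas
    by (simp add: nn_integral_sum nn_integral_cmult borel_measurable_prod_ennreal
        borel_measurable_times_ennreal)
  also have "\<dots> = (\<Sum>x\<in>?X. ennreal (?G x) * ennreal (bernoulli_weight (mean_collision_prob n psi S) ?I x))"
    by (simp add: nn_integral_prod_agree_prob[OF S pure])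
  also have "\<dots> = ennreal (\<Sum>x\<in>?X. ?G x * bernoulli_weight (mean_collision_prob n psi S) ?I x)"
    using mean_collision_prob_nonneg[OF pure] mean_collision_prob_le_1[OF S pure]
    by (simp add: sum_ennreal[symmetric] ennreal_mult bernoulli_weight_nonneg)
  finally show ?thesis by (simp add: if_distrib[of "\<lambda>c. c * _"] cong: if_cong)
qed

end

theorem theorem2:
  fixes n :: nat and psi :: "nat set \<Rightarrow> complex" and S :: "nat set"
    and eps delta :: real and H :: "mat2 measure"
  assumes "is_pure_state n psi"
    and "S \<subseteq> qubits n" and "S \<noteq> {}"
    and "eps > 0"
    and "0 < delta" and "delta < 1"
    and "haar_U2 H"
  shows "failure_prob H n psi S eps
           (nat \<lceil>8 * ln (1 / delta)\<rceil>)
           (nat \<lceil>4 * (3/2) ^ card S / eps\<^sup>2\<rceil>)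
         \<le> ennreal delta"
proof -
  note pure = assms(1) and S = assms(2) and eps = assms(4) and delta = assms(5,6) and haar = assms(7)
  let ?a = "(3/2) ^ card S :: real" and ?p = "mean_collision_prob n psi S"
  let ?NB = "nat \<lceil>8 * ln (1 / delta)\<rceil>" and ?B = "nat \<lceil>4 * (3/2) ^ card S / eps\<^sup>2\<rceil>"
  have p: "0 \<le> ?p" "?p \<le> 1"
    using mean_collision_prob_nonneg[OF pure] mean_collision_prob_le_1[OF S pure] .
  have "0 < 8 * ln (1 / delta)" using delta by simp
  then have NB: "1 \<le> ?NB" by linarith
  have B: "4 * ?a / eps\<^sup>2 \<le> real ?B" by (rule real_nat_ceiling_ge)
  have "failure_prob H n psi S eps ?NB ?B = ennreal (\<Sum>x\<in>{1..?NB * ?B} \<rightarrow>\<^sub>E UNIV.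
      if eps \<le> \<bar>median_of_means ?a ?B ?NB x - (1 - ?a * ?p)\<bar> then bernoulli_weight ?p {1..?NB * ?B} x else 0)"
    unfolding failure_prob_eq[OF haar S pure] conc_ent_eq ..
  also have "\<dots> \<le> ennreal ((sqrt 3 / 2) ^ ?NB)"
    using scaled_mean_collision_prob_le_1[OF S pure]
    by (intro ennreal_leI median_of_means_tail p eps NB B) simp_all
  also have "\<dots> \<le> ennreal delta"
    by (intro ennreal_leI sqrt3_half_pow_le delta)
  finally show ?thesis .
qed

end
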